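(* For every $\theta\in\mathbb R$, $E[(\hat\theta_n-\theta)^2]<\infty$ for all sufficiently large $n$, and \[\lim_{n\to\infty}n\,E\!\left[(\hat\theta_n-\theta)^2\right]=\frac{m+1}{m(2m-1)}.\]
   Context: Fix $m>1/2$. Let $c_m:=\left(\int_{\mathbb R}(1+x^2)^{-m}\,dx\right)^{-1}$ and $f(x):=c_m(1+x^2)^{-m}$. For $\theta\in\mathbb R$, $\mathrm{PVII}_m(\theta,1)$ denotes the Pearson Type VII distribution with location $\theta$ and scale $1$, i.e. the law with density $x\mapsto f(x-\theta)$. Let $(X_n)_{n\ge1}$ be i.i.d. random variables on a probability space $(\Omega,\mathcal F,P)$ with law $\mathrm{PVII}_m(\theta,1)$. For each $n$, let $\hat\theta_n(x_1,\dots,x_n)$ be any Borel measurable function on $\mathbb R^n$ such that $\hat\theta_n(x_1,\dots,x_n)$ is a maximizer of $t\mapsto\prod_{i=1}^n f(x_i-t)$ over $t\in\mathbb R$, and let $\hat\theta_n:=\hat\theta_n(X_1,\dots,X_n)$ (the maximum likelihood estimator). *)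

theory Defs
  imports "HOL-Probability.Probability"
begin

definition pvii_const :: "real \<Rightarrow> real" where
  "pvii_const m = 1 / (\<integral>x. (1 + x\<^sup>2) powr (- m) \<partial>lborel)"

definition pvii_density :: "real \<Rightarrow> real \<Rightarrow> real" where
  "pvii_density m x = pvii_const m * (1 + x\<^sup>2) powr (- m)"

end

theory Submission
  imports Defs
begin

(* Since d/dt log f(x - t) = 2 m psi(x - t) with psi u = u / (1 + u^2), the error
   T = est_n - theta of the MLE solves sum_i psi(Y_i - T) = 0, where Y_i = X_i - theta.
   Linearising, T ~ S / D with S = sum_i psi(Y_i) and D = sum_i psi'(Y_i) ~ n mu, and
   E S^2 = n sigma^2; the moments sigma^2 = E psi(Y)^2 and mu = E psi'(Y) follow from the
   recurrence for the integrals of (1 + y^2)^(-p), and sigma^2 / mu^2 = (m + 1) / (m (2m - 1)).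
   To pass to second moments: Hoeffding's inequality on a finite net of shifts shows that, outside
   an event of probability o(n^-3), T is small and D is close to n mu, so that n T^2 lies between
   S^2 / (n (mu + eps)^2) and S^2 / (n (mu - eps)^2). On the exceptional event T^2 is dominated by
   the envelope 2 prod_i (1 + Y_i^2)^(2/n), obtained by comparing the likelihood at est_n and at
   theta; its second moment is bounded uniformly in n because E (1 + Y^2)^s is finite for
   s < m - 1/2. *)

lemma integrable_mult_bounded:
  fixes g h :: "'a \<Rightarrow> real"
  assumes "integrable M g" "h \<in> borel_measurable M" "\<And>x. \<bar>h x\<bar> \<le> B"
  shows "integrable M (\<lambda>x. g x * h x)"
proof (rule Bochner_Integration.integrable_bound[OF integrable_mult_right[OF integrable_abs[OF assms(1)]]])
  have "\<bar>g x\<bar> * \<bar>h x\<bar> \<le> \<bar>B\<bar> * \<bar>g x\<bar>" for x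
    using mult_left_mono[of "\<bar>h x\<bar>" "\<bar>B\<bar>" "\<bar>g x\<bar>"] assms(3)[of x] by (simp add: mult.commute)
  then show "AE x in M. norm (g x * h x) \<le> norm (B * \<bar>g x\<bar>)"
    by (intro AE_I2) (simp add: abs_mult)
qed (use assms in auto)

lemma powr_neg_diff_ge:
  fixes p A B :: real
  assumes p: "p > 0" and A: "A > 0" and AB: "A \<le> B"
  shows "p * B powr (-p - 1) * (B - A) \<le> A powr (-p) - B powr (-p)"
proof -
  define x where "x = B / A"
  have B: "B > 0" using A AB by simp
  have x1: "x \<ge> 1" unfolding x_def using A AB by simp
  have ln: "1 - 1/x \<le> ln x"
    using ln_le_minus_one[of "1/x"] x1 by (simp add: ln_div)
  have "1 + p * ln x \<le> x powr p"
    using exp_ge_add_one_self[of "p * ln x"] x1 by (simp add: powr_def)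
  then have xp: "1 + p * (1 - 1/x) \<le> x powr p"
    using mult_left_mono[OF ln, of p] p by linarith
  have "A powr (-p) - B powr (-p) = B powr (-p) * (x powr p - 1)"
    unfolding x_def using A B by (simp add: powr_divide powr_minus field_simps)
  also have "\<dots> \<ge> B powr (-p) * (p * (1 - 1/x))"
    using xp by (intro mult_left_mono) auto
  also have "B powr (-p) * (p * (1 - 1/x)) = p * B powr (-p - 1) * (B - A)"
    unfolding x_def using A B by (simp add: powr_diff field_simps)
  finally show ?thesis .
qed

lemma le_powr_inverse_of_power_le:
  fixes a b :: real
  assumes "0 \<le> a" "a ^ n \<le> b" "n > 0"
  shows "a \<le> b powr (1 / real n)"
proof -
  have "a = (a ^ n) powr (1 / real n)"
    using assms by (cases "a = 0") (simp_all add: powr_realpow[symmetric] powr_powr)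
  also have "\<dots> \<le> b powr (1 / real n)" using assms by (intro powr_mono2) auto
  finally show ?thesis .
qed

lemma sq_bounds_of_eq_mult:
  fixes S T D a b :: real
  assumes "S = T * D" "0 < a" "a \<le> D" "D \<le> b"
  shows "S\<^sup>2 / b\<^sup>2 \<le> T\<^sup>2" "T\<^sup>2 \<le> S\<^sup>2 / a\<^sup>2"
proof -
  have D: "0 < D" using assms by linarith
  have T: "T\<^sup>2 = S\<^sup>2 / D\<^sup>2" using assms(1) D by (simp add: power_mult_distrib)
  show "S\<^sup>2 / b\<^sup>2 \<le> T\<^sup>2" unfolding T using assms D by (intro divide_left_mono power_mono) auto
  show "T\<^sup>2 \<le> S\<^sup>2 / a\<^sup>2" unfolding T using assms D by (intro divide_left_mono power_mono) auto
qed

lemma powr_le_chord: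
  fixes z s a :: real
  assumes "1 \<le> z" "0 \<le> s" "s \<le> a" "0 < a"
  shows "z powr s \<le> 1 + (s / a) * (z powr a - 1)"
proof -
  define t where "t = s / a"
  have t: "0 \<le> t" "t \<le> 1" unfolding t_def using assms by auto
  have "z powr s = exp ((1 - t) *\<^sub>R 0 + t *\<^sub>R (a * ln z))"
    using assms unfolding t_def by (simp add: powr_def)
  also have "\<dots> \<le> (1 - t) * exp 0 + t * exp (a * ln z)"
    by (rule convex_onD[OF exp_convex t]) auto
  also have "exp (a * ln z) = z powr a" using assms by (simp add: powr_def mult.commute)
  finally show ?thesis unfolding t_def by (simp add: algebra_simps)
qed

lemma mult_le_sq_div_add_cube:
  fixes W :: real
  assumes "n > 0" "W \<ge> 0"
  shows "real n * W \<le> W\<^sup>2 / real n + real n ^ 3"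
proof (cases "W \<ge> (real n)\<^sup>2")
  case True
  then have "(real n)\<^sup>2 * W \<le> W * W" using assms by (intro mult_right_mono) auto
  then have "real n * W \<le> W\<^sup>2 / real n" using assms by (simp add: field_simps power2_eq_square)
  then show ?thesis by (simp add: add_increasing2)
next
  case False
  then have "real n * W \<le> real n * (real n)\<^sup>2" using assms by (intro mult_left_mono) auto
  then show ?thesis by (simp add: power2_eq_square power3_eq_cube add_increasing)
qed

lemma exists_grid_point_near:
  fixes s \<delta> T :: real
  assumes s: "s > 0" and T: "\<delta> \<le> T" "T \<le> \<delta> + real N * s"
  shows "\<exists>j\<le>N. \<bar>T - (\<delta> + real j * s)\<bar> \<le> s"
proof -
  define q where "q = (T - \<delta>) / s"
  have q: "0 \<le> q" "q \<le> real N" unfolding q_def using s T by (simp_all add: divide_le_eq mult.commute)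
  define j where "j = nat \<lfloor>q\<rfloor>"
  have jq: "real j \<le> q" "q < real j + 1" unfolding j_def using q by linarith+
  then have "\<delta> + real j * s \<le> T" "T < \<delta> + (real j + 1) * s"
    using s unfolding q_def by (simp_all add: le_divide_eq divide_less_eq)
  then have "\<bar>T - (\<delta> + real j * s)\<bar> \<le> s" by (simp add: algebra_simps)
  moreover have "j \<le> N" using jq q by linarith
  ultimately show ?thesis by blast
qed

lemma finite_net_annulus:
  fixes \<delta> K h :: real
  assumes \<delta>: "0 < \<delta>" "\<delta> < K" and h: "0 < h"
  obtains G where "finite G" "card G \<le> 2 * (nat \<lceil>(K - \<delta>) / h\<rceil> + 2)"
    "\<And>g. g \<in> G \<Longrightarrow> \<delta> \<le> \<bar>g\<bar> \<and> \<bar>g\<bar> \<le> K"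
    "\<And>t. \<delta> \<le> \<bar>t\<bar> \<Longrightarrow> \<bar>t\<bar> \<le> K \<Longrightarrow> \<exists>g\<in>G. \<bar>t - g\<bar> \<le> h"
proof -
  define N where "N = nat \<lceil>(K - \<delta>) / h\<rceil> + 1"
  define s where "s = (K - \<delta>) / real N"
  define G where "G = (\<lambda>j. \<delta> + real j * s) ` {..N} \<union> (\<lambda>j. - (\<delta> + real j * s)) ` {..N}"
  have N: "1 \<le> real N" "(K - \<delta>) / h \<le> real N" unfolding N_def by linarith+
  have s: "0 < s" "\<delta> + real N * s = K" unfolding s_def using N \<delta> by auto
  have "K - \<delta> \<le> real N * h" using N(2) h by (simp add: divide_le_eq)
  then have sh: "s \<le> h" unfolding s_def using N(1) by (simp add: divide_le_eq mult.commute)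
  have "card G \<le> card ((\<lambda>j. \<delta> + real j * s) ` {..N}) + card ((\<lambda>j. - (\<delta> + real j * s)) ` {..N})"
    unfolding G_def by (rule card_Un_le)
  also have "\<dots> \<le> card {..N} + card {..N}" by (intro add_mono card_image_le) auto
  finally have card: "card G \<le> 2 * (nat \<lceil>(K - \<delta>) / h\<rceil> + 2)" unfolding N_def by simp
  have between: "\<delta> \<le> \<bar>g\<bar> \<and> \<bar>g\<bar> \<le> K" if "g \<in> G" for g
  proof -
    obtain j where j: "j \<le> N" "g = \<delta> + real j * s \<or> g = - (\<delta> + real j * s)"
      using \<open>g \<in> G\<close> unfolding G_def by auto
    have js: "0 \<le> real j * s" "real j * s \<le> real N * s"
      using j(1) s(1) by (auto intro: mult_right_mono)
    then have "\<bar>\<delta> + real j * s\<bar> = \<delta> + real j * s" using \<delta>(1) by simp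
    then have "\<bar>g\<bar> = \<delta> + real j * s" using j(2) by auto
    then show ?thesis using js s(2) \<delta>(1) by linarith
  qed
  have near: "\<exists>g\<in>G. \<bar>t - g\<bar> \<le> h" if t: "\<delta> \<le> \<bar>t\<bar>" "\<bar>t\<bar> \<le> K" for t
  proof -
    obtain j where j: "j \<le> N" "\<bar>\<bar>t\<bar> - (\<delta> + real j * s)\<bar> \<le> s"
      using exists_grid_point_near[OF s(1), of \<delta> "\<bar>t\<bar>" N] t s(2) by auto
    define g where "g = (if t \<ge> 0 then \<delta> + real j * s else - (\<delta> + real j * s))"
    have "g \<in> G" unfolding g_def G_def using j(1) by auto
    moreover have "\<bar>t - g\<bar> \<le> h" using j(2) sh unfolding g_def by (auto simp: abs_if split: if_splits)
    ultimately show ?thesis by blast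
  qed
  show thesis by (rule that[of G]) (use card between near in \<open>auto simp: G_def\<close>)
qed

lemma LIMSEQ_cube_mult_power:
  fixes q :: real
  assumes "0 \<le> q" "q < 1"
  shows "(\<lambda>n. real n ^ 3 * q ^ n) \<longlonglongrightarrow> 0"
proof -
  define r where "r = root 3 q"
  have r: "0 \<le> r" "r < 1" "r ^ 3 = q" unfolding r_def using assms by simp_all
  have "(\<lambda>n. (real n * r ^ n) ^ 3) \<longlonglongrightarrow> 0 ^ 3"
    using powser_times_n_limit_0[of r] r by (intro tendsto_intros) simp
  moreover have "(real n * r ^ n) ^ 3 = real n ^ 3 * q ^ n" for n
    by (simp add: power_mult_distrib r(3)[symmetric] power_mult[symmetric] mult.commute)
  ultimately show ?thesis by simp
qed

lemma LIMSEQ_cube_mult_exp: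
  fixes a :: real
  assumes "a > 0"
  shows "(\<lambda>n. real n ^ 3 * exp (- (real n * a))) \<longlonglongrightarrow> 0"
  using LIMSEQ_cube_mult_power[of "exp (-a)"] assms by (simp add: exp_of_nat_mult[symmetric])

lemma LIMSEQ_of_eps_bounds:
  fixes x :: "nat \<Rightarrow> real" and lo hi :: "real \<Rightarrow> real"
  assumes lo: "(lo \<longlongrightarrow> L) (at_right 0)" and hi: "(hi \<longlongrightarrow> L) (at_right 0)" and "0 < \<epsilon>\<^sub>0"
    and bounds: "\<And>\<epsilon> e. 0 < \<epsilon> \<Longrightarrow> \<epsilon> < \<epsilon>\<^sub>0 \<Longrightarrow> 0 < e \<Longrightarrow>
      eventually (\<lambda>n. lo \<epsilon> - e < x n \<and> x n < hi \<epsilon> + e) sequentially"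
  shows "x \<longlonglongrightarrow> L"
proof (rule tendstoI)
  fix e :: real assume e: "e > 0"
  have "\<forall>\<^sub>F \<epsilon> in at_right 0. L - e/2 < lo \<epsilon>" "\<forall>\<^sub>F \<epsilon> in at_right 0. hi \<epsilon> < L + e/2"
    using order_tendstoD(1)[OF lo, of "L - e/2"] order_tendstoD(2)[OF hi, of "L + e/2"] e by simp_all
  with eventually_at_right_real[OF \<open>0 < \<epsilon>\<^sub>0\<close>]
  have "\<forall>\<^sub>F \<epsilon> in at_right 0. \<epsilon> \<in> {0<..<\<epsilon>\<^sub>0} \<and> L - e/2 < lo \<epsilon> \<and> hi \<epsilon> < L + e/2"
    by eventually_elim auto
  then obtain \<epsilon> where \<epsilon>: "0 < \<epsilon>" "\<epsilon> < \<epsilon>\<^sub>0" "L - e/2 < lo \<epsilon>" "hi \<epsilon> < L + e/2"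
    using eventually_happens[of _ "at_right (0::real)"] by auto
  have "\<forall>\<^sub>F n in sequentially. lo \<epsilon> - e/2 < x n \<and> x n < hi \<epsilon> + e/2"
    using bounds[OF \<epsilon>(1,2), of "e/2"] e by simp
  then show "\<forall>\<^sub>F n in sequentially. dist (x n) L < e"
    by eventually_elim (use \<epsilon> in \<open>auto simp: dist_real_def abs_less_iff\<close>)
qed

section \<open>The score function\<close>

lemma one_plus_sq_pos [simp]: "0 < 1 + (x::real)\<^sup>2"
  by (simp add: add_pos_nonneg)

lemma one_plus_sq_neq_0 [simp]: "1 + (x::real)\<^sup>2 \<noteq> 0"
  using one_plus_sq_pos[of x] by linarith

definition psi :: "real \<Rightarrow> real" where
  "psi u = u / (1 + u\<^sup>2)"

definition psi_deriv :: "real \<Rightarrow> real" where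
  "psi_deriv u = (1 - u\<^sup>2) / (1 + u\<^sup>2)\<^sup>2"

lemma psi_measurable [measurable]: "psi \<in> borel_measurable borel"
  unfolding psi_def by measurable

lemma psi_deriv_measurable [measurable]: "psi_deriv \<in> borel_measurable borel"
  unfolding psi_deriv_def by measurable

lemma psi_minus: "psi (- u) = - psi u"
  by (simp add: psi_def)

lemma psi_pos: "u > 0 \<Longrightarrow> psi u > 0"
  by (simp add: psi_def)

lemma psi_nonneg: "u \<ge> 0 \<Longrightarrow> psi u \<ge> 0"
  by (simp add: psi_def)

lemma abs_psi_le: "\<bar>psi u\<bar> \<le> 1/2"
proof -
  have "0 \<le> (\<bar>u\<bar> - 1)\<^sup>2" by simp
  then have "2 * \<bar>u\<bar> \<le> 1 + u\<^sup>2" by (simp add: power2_eq_square algebra_simps abs_mult_self_eq)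
  then show ?thesis by (simp add: psi_def abs_divide pos_divide_le_eq)
qed

lemma psi_bounds: "-1/2 \<le> psi u" "psi u \<le> 1/2"
  using abs_psi_le[of u] by (auto simp: abs_le_iff)

lemma psi_ge_two_fifths:
  assumes "1 \<le> v" "v \<le> 2"
  shows "2/5 \<le> psi v"
proof -
  have "(2 * v - 1) * (v - 2) \<le> 0" using assms by (intro mult_nonneg_nonpos) auto
  then have "2 * (1 + v\<^sup>2) \<le> 5 * v" by (simp add: algebra_simps power2_eq_square)
  then show ?thesis unfolding psi_def by (simp add: le_divide_eq)
qed

lemma abs_psi_diff_le: "\<bar>psi a - psi b\<bar> \<le> \<bar>a - b\<bar>"
proof -
  define D where "D = (1 + a\<^sup>2) * (1 + b\<^sup>2)"
  have D: "D > 0" unfolding D_def by simp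
  have eq: "psi a - psi b = (a - b) * ((1 - a * b) / D)"
    unfolding psi_def D_def by (simp add: divide_simps) (simp add: power2_eq_square algebra_simps)
  have "2 * \<bar>a * b\<bar> \<le> a\<^sup>2 + b\<^sup>2"
    using sum_squares_bound[of "\<bar>a\<bar>" "\<bar>b\<bar>"] by (simp add: abs_mult)
  then have "\<bar>1 - a * b\<bar> \<le> D"
    unfolding D_def by (simp add: algebra_simps) (smt (verit) zero_le_mult_iff zero_le_power2)
  then have q: "\<bar>(1 - a * b) / D\<bar> \<le> 1" using D by (simp add: abs_divide)
  have "\<bar>psi a - psi b\<bar> = \<bar>a - b\<bar> * \<bar>(1 - a * b) / D\<bar>" unfolding eq by (rule abs_mult)
  also have "\<dots> \<le> \<bar>a - b\<bar>" using q by (rule mult_left_le) simp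
  finally show ?thesis .
qed

lemma abs_psi_deriv_le: "\<bar>psi_deriv u\<bar> \<le> 1"
proof -
  have "\<bar>1 - u\<^sup>2\<bar> \<le> 1 + u\<^sup>2" using zero_le_power2[of u] unfolding abs_le_iff by linarith
  also have "\<dots> \<le> (1 + u\<^sup>2)\<^sup>2"
    using mult_left_mono[of 1 "1 + u\<^sup>2" "1 + u\<^sup>2"] by (simp add: power2_eq_square)
  finally show ?thesis by (simp add: psi_deriv_def abs_divide pos_divide_le_eq)
qed

lemma psi_deriv_bounds: "-1 \<le> psi_deriv u" "psi_deriv u \<le> 1"
  using abs_psi_deriv_le[of u] by (auto simp: abs_le_iff)

lemma psi_diff_expansion:
  assumes "\<bar>t\<bar> \<le> 1"
  obtains r where "psi a - psi (a - t) = t * (psi_deriv a + r)" "\<bar>r\<bar> \<le> 5 * \<bar>t\<bar>"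
proof -
  define N where "N = 3 * a - a ^ 3 - t + t * a\<^sup>2"
  define D where "D = (1 + a\<^sup>2)\<^sup>2 * (1 + (a - t)\<^sup>2)"
  have eq: "psi a - psi (a - t) = t * (psi_deriv a + t * N / D)"
    unfolding psi_def psi_deriv_def N_def D_def
    by (simp add: divide_simps) (simp add: power2_eq_square power3_eq_cube algebra_simps)
  have D: "(1 + a\<^sup>2)\<^sup>2 \<le> D" "D > 0" unfolding D_def by (simp_all add: mult_le_cancel_left1)
  have "0 \<le> (\<bar>a\<bar> - 1)\<^sup>2" by simp
  then have a1: "\<bar>a\<bar> \<le> 1 + a\<^sup>2" by (simp add: power2_eq_square algebra_simps abs_mult_self_eq)
  have "\<bar>t * a\<^sup>2\<bar> \<le> a\<^sup>2" using assms by (simp add: abs_mult mult_left_le_one_le)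
  then have "\<bar>N\<bar> \<le> 3 * \<bar>a\<bar> + \<bar>a\<bar> ^ 3 + 1 + a\<^sup>2"
    using assms unfolding N_def by (simp add: power_abs[symmetric])
  also have "\<dots> \<le> 5 * (1 + a\<^sup>2)\<^sup>2"
  proof -
    have sq: "1 + a\<^sup>2 \<le> (1 + a\<^sup>2)\<^sup>2"
      using mult_left_mono[of 1 "1 + a\<^sup>2" "1 + a\<^sup>2"] by (simp add: power2_eq_square)
    have "\<bar>a\<bar> ^ 3 = \<bar>a\<bar> * a\<^sup>2" by (simp add: power3_eq_cube power2_eq_square abs_mult_self_eq)
    also have "\<dots> \<le> (1 + a\<^sup>2) * (1 + a\<^sup>2)" using a1 by (intro mult_mono) auto
    finally have "\<bar>a\<bar> ^ 3 \<le> (1 + a\<^sup>2)\<^sup>2" by (simp add: power2_eq_square)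
    with a1 sq show ?thesis by linarith
  qed
  also have "\<dots> \<le> 5 * D" using D(1) by simp
  finally have "\<bar>N\<bar> / D \<le> 5" using D by (simp add: divide_le_eq)
  then have "\<bar>t\<bar> * (\<bar>N\<bar> / D) \<le> \<bar>t\<bar> * 5" by (rule mult_left_mono) simp
  moreover have "\<bar>t * N / D\<bar> = \<bar>t\<bar> * (\<bar>N\<bar> / D)" using D by (simp add: abs_mult abs_divide)
  ultimately have "\<bar>t * N / D\<bar> \<le> 5 * \<bar>t\<bar>" by simp
  with eq show thesis by (rule that)
qed

section \<open>The kernel \<open>(1 + y\<^sup>2) powr -p\<close>\<close>

definition pvii_kernel :: "real \<Rightarrow> real \<Rightarrow> real" where
  "pvii_kernel p y = (1 + y\<^sup>2) powr (- p)"

definition pvii_mass :: "real \<Rightarrow> real" where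
  "pvii_mass p = (\<integral>y. pvii_kernel p y \<partial>lborel)"

lemma pvii_kernel_measurable [measurable]: "pvii_kernel p \<in> borel_measurable borel"
  unfolding pvii_kernel_def by measurable

lemma pvii_kernel_pos [simp]: "0 < pvii_kernel p y"
  by (simp add: pvii_kernel_def)

lemma pvii_kernel_neq_0 [simp]: "pvii_kernel p y \<noteq> 0"
  using pvii_kernel_pos[of p y] by linarith

lemma pvii_kernel_minus: "pvii_kernel p (- y) = pvii_kernel p y"
  by (simp add: pvii_kernel_def)

lemma pvii_kernel_diff_commute: "pvii_kernel p (a - b) = pvii_kernel p (b - a)"
  by (simp add: pvii_kernel_def power2_commute)

lemma pvii_kernel_mult: "pvii_kernel p y * pvii_kernel q y = pvii_kernel (p + q) y"
  by (simp add: pvii_kernel_def powr_add[symmetric] add.commute)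

lemma pvii_kernel_antimono: "0 \<le> p \<Longrightarrow> b\<^sup>2 \<le> a\<^sup>2 \<Longrightarrow> pvii_kernel p a \<le> pvii_kernel p b"
  unfolding pvii_kernel_def by (rule powr_mono2') auto

lemma pvii_density_eq: "pvii_density m y = pvii_const m * pvii_kernel m y"
  unfolding pvii_density_def pvii_kernel_def ..

lemma pvii_const_eq: "pvii_const m = 1 / pvii_mass m"
  unfolding pvii_const_def pvii_mass_def pvii_kernel_def ..

lemma nn_integral_powr_atLeast_1:
  assumes "p > 1/2"
  shows "(\<integral>\<^sup>+y. ennreal (indicator {1..} y * y powr (-2 * p)) \<partial>lborel) = ennreal (1 / (2 * p - 1))"
proof -
  have "((\<lambda>x. x powr (-2 * p)) has_integral -(1 powr (-2 * p + 1)) / (-2 * p + 1)) {1..}"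
    using assms by (intro has_integral_powr_to_inf) auto
  moreover have "-(1 powr (-2 * p + 1)) / (-2 * p + 1) = 1 / (2 * p - 1)"
    using assms by (simp add: field_simps)
  ultimately have "((\<lambda>x. x powr (-2 * p)) has_integral 1 / (2 * p - 1)) {1..}" by simp
  then show ?thesis by (subst nn_integral_has_integral_lebesgue) auto
qed

lemma integrable_pvii_kernel:
  assumes p: "p > 1/2"
  shows "integrable lborel (pvii_kernel p)"
proof (rule integrableI_nonneg)
  show "AE y in lborel. 0 \<le> pvii_kernel p y" by (simp add: less_imp_le)
  define tail where "tail y = ennreal (indicator {1..} y * y powr (-2 * p))" for y :: real
  have le: "ennreal (pvii_kernel p y) \<le> indicator {-1..1} y + tail y + tail (- y)" for y
  proof (cases "\<bar>y\<bar> \<le> 1")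
    case True
    have "pvii_kernel p y \<le> 1"
      using powr_mono[of "-p" 0 "1 + y\<^sup>2"] p by (simp add: pvii_kernel_def)
    then have "ennreal (pvii_kernel p y) \<le> indicator {-1..1} y"
      using True by (simp add: indicator_def abs_le_iff)
    also have "\<dots> \<le> indicator {-1..1} y + tail y + tail (- y)"
      by (intro add_increasing2) auto
    finally show ?thesis .
  next
    case False
    have "pvii_kernel p y \<le> (\<bar>y\<bar>\<^sup>2) powr (-p)"
      using False p unfolding pvii_kernel_def by (intro powr_mono2') auto
    also have "\<dots> = \<bar>y\<bar> powr (-2 * p)"
    proof -
      have "\<bar>y\<bar> powr (-2 * p) = (\<bar>y\<bar> powr 2) powr (-p)" by (subst powr_powr) simp
      also have "\<bar>y\<bar> powr 2 = \<bar>y\<bar>\<^sup>2" by simp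
      finally show ?thesis by simp
    qed
    finally show ?thesis
      using False by (cases "y \<ge> 0") (auto simp: tail_def indicator_def add_increasing)
  qed
  have "(\<integral>\<^sup>+y. pvii_kernel p y \<partial>lborel)
      \<le> (\<integral>\<^sup>+y. indicator {-1..1} y + tail y + tail (- y) \<partial>lborel)"
    using le by (intro nn_integral_mono) auto
  also have "\<dots> = (\<integral>\<^sup>+y. indicator {-1..1} y + tail y \<partial>lborel) + (\<integral>\<^sup>+y. tail (- y) \<partial>lborel)"
    unfolding tail_def by (rule nn_integral_add) measurable
  also have "(\<integral>\<^sup>+y. indicator {-1..1} y + tail y \<partial>lborel)
      = (\<integral>\<^sup>+y. indicator {-1..1::real} y \<partial>lborel) + (\<integral>\<^sup>+y. tail y \<partial>lborel)"
    unfolding tail_def by (rule nn_integral_add) measurable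
  also have "(\<integral>\<^sup>+y. tail (- y) \<partial>lborel) = (\<integral>\<^sup>+y. tail y \<partial>lborel)"
    using nn_integral_real_affine[of tail "-1" 0] unfolding tail_def by simp
  also have "(\<integral>\<^sup>+y. tail y \<partial>lborel) = ennreal (1 / (2 * p - 1))"
    unfolding tail_def by (rule nn_integral_powr_atLeast_1[OF p])
  also have "(\<integral>\<^sup>+y. indicator {-1..1::real} y \<partial>lborel) = 2"
    by simp
  also have "2 + ennreal (1 / (2 * p - 1)) + ennreal (1 / (2 * p - 1)) < \<infinity>"
    by (simp add: ennreal_plus[symmetric] del: ennreal_plus)
  finally show "(\<integral>\<^sup>+y. pvii_kernel p y \<partial>lborel) < \<infinity>" .
qed simp

lemma integrable_pvii_kernel_shift:
  "p > 1/2 \<Longrightarrow> integrable lborel (\<lambda>v. pvii_kernel p (t + v))"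
  using lborel_integrable_real_affine[OF integrable_pvii_kernel, of p 1 t] by simp

lemma pvii_mass_pos:
  assumes "p > 1/2"
  shows "pvii_mass p > 0"
proof -
  have "pvii_mass p \<noteq> 0"
  proof
    assume "pvii_mass p = 0"
    then have "AE y in lborel. pvii_kernel p y = 0"
      using integral_nonneg_eq_0_iff_AE[OF integrable_pvii_kernel[OF assms]]
      unfolding pvii_mass_def by (simp add: less_imp_le)
    then have "AE (y::real) in lborel. False" by simp
    then show False using AE_iff_measurable[of "UNIV::real set" lborel "\<lambda>_. False"] by simp
  qed
  moreover have "0 \<le> pvii_mass p"
    unfolding pvii_mass_def by (intro Bochner_Integration.integral_nonneg) (simp add: less_imp_le)
  ultimately show ?thesis by simp
qed

lemma tendsto_mult_pvii_kernel:
  assumes p: "p > 1/2" and lim: "filterlim (\<lambda>y::real. 1 + y\<^sup>2) at_top F"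
  shows "((\<lambda>y. y * pvii_kernel p y) \<longlongrightarrow> 0) F"
proof (rule Lim_null_comparison)
  show "((\<lambda>y. (1 + y\<^sup>2) powr (1/2 - p)) \<longlongrightarrow> 0) F"
    using p lim by (intro tendsto_neg_powr) auto
  show "\<forall>\<^sub>F y in F. norm (y * pvii_kernel p y) \<le> (1 + y\<^sup>2) powr (1/2 - p)"
  proof (intro always_eventually allI)
    fix y :: real
    have "\<bar>y\<bar> = sqrt (y\<^sup>2)" by simp
    also have "\<dots> \<le> sqrt (1 + y\<^sup>2)" by (rule real_sqrt_le_mono) simp
    also have "\<dots> = (1 + y\<^sup>2) powr (1/2)" by (simp add: powr_half_sqrt)
    finally have "\<bar>y\<bar> * pvii_kernel p y \<le> (1 + y\<^sup>2) powr (1/2) * (1 + y\<^sup>2) powr (-p)"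
      unfolding pvii_kernel_def by (intro mult_right_mono) auto
    also have "\<dots> = (1 + y\<^sup>2) powr (1/2 - p)" by (simp add: powr_add[symmetric])
    finally show "norm (y * pvii_kernel p y) \<le> (1 + y\<^sup>2) powr (1/2 - p)"
      by (simp add: abs_mult abs_of_pos)
  qed
qed

lemma has_real_derivative_mult_pvii_kernel:
  "((\<lambda>y. y * pvii_kernel p y) has_real_derivative
     (1 - 2 * p) * pvii_kernel p y + 2 * p * pvii_kernel (p + 1) y) (at y)"
proof -
  have "((\<lambda>y. y * pvii_kernel p y) has_real_derivative
      1 * (1 + y\<^sup>2) powr (-p) + y * ((-p) * (1 + y\<^sup>2) powr (-p - 1) * (2 * y))) (at y)"
    unfolding pvii_kernel_def using one_plus_sq_pos[of y]
    by (intro derivative_eq_intros DERIV_fun_powr) (auto simp: power2_eq_square)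
  moreover have "1 * (1 + y\<^sup>2) powr (-p) + y * ((-p) * (1 + y\<^sup>2) powr (-p - 1) * (2 * y))
      = (1 - 2 * p) * pvii_kernel p y + 2 * p * pvii_kernel (p + 1) y"
  proof -
    have e1: "pvii_kernel (p + 1) y = (1 + y\<^sup>2) powr (-p - 1)"
      unfolding pvii_kernel_def by (rule arg_cong[where f="\<lambda>e. (1 + y\<^sup>2) powr e"]) simp
    have e2: "(1 + y\<^sup>2) powr (-p) = (1 + y\<^sup>2) * (1 + y\<^sup>2) powr (-p - 1)"
      using powr_add[of "1 + y\<^sup>2" 1 "-p - 1"] by (simp add: less_imp_le)
    define q where "q = (1 + y\<^sup>2) powr (-p - 1)"
    show ?thesis unfolding e1 unfolding pvii_kernel_def e2 q_def[symmetric]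
      by (simp add: algebra_simps power2_eq_square)
  qed
  ultimately show ?thesis by simp
qed

text \<open>Integration by parts of \<open>1 \<cdot> pvii_kernel p\<close>; the boundary term \<open>y \<cdot> pvii_kernel p y\<close>
  vanishes at \<open>\<plusminus>\<infinity>\<close>.\<close>
lemma pvii_mass_add_1:
  assumes p: "p > 1/2"
  shows "pvii_mass (p + 1) = (2 * p - 1) / (2 * p) * pvii_mass p"
proof -
  define f where "f y = (1 - 2 * p) * pvii_kernel p y + 2 * p * pvii_kernel (p + 1) y" for y
  have int: "integrable lborel (pvii_kernel p)" "integrable lborel (pvii_kernel (p + 1))"
    using p by (auto intro: integrable_pvii_kernel)
  have top: "filterlim (\<lambda>y::real. 1 + y\<^sup>2) at_top at_top"
    by (intro filterlim_tendsto_add_at_top[OF tendsto_const] filterlim_pow_at_top filterlim_ident) auto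
  then have bot: "filterlim (\<lambda>y::real. 1 + y\<^sup>2) at_top at_bot"
    unfolding filterlim_at_bot_mirror by simp
  have "(LBINT y=-\<infinity>..\<infinity>. f y) = 0 - 0"
  proof (rule interval_integral_FTC_integrable)
    show "((\<lambda>y. y * pvii_kernel p y) has_vector_derivative f y) (at y)" for y
      using has_real_derivative_mult_pvii_kernel[of p y]
      by (simp add: f_def has_real_derivative_iff_has_vector_derivative)
    show "isCont f y" for y
      unfolding f_def pvii_kernel_def by (intro continuous_intros) auto
    show "set_integrable lborel (einterval (- \<infinity>) \<infinity>) f"
      using int by (simp add: set_integrable_def f_def)
    show "(((\<lambda>y. y * pvii_kernel p y) \<circ> real_of_ereal) \<longlongrightarrow> 0) (at_right (- \<infinity>))"
      unfolding ereal_tendsto_simps using tendsto_mult_pvii_kernel[OF p bot] by simp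
    show "(((\<lambda>y. y * pvii_kernel p y) \<circ> real_of_ereal) \<longlongrightarrow> 0) (at_left \<infinity>)"
      unfolding ereal_tendsto_simps using tendsto_mult_pvii_kernel[OF p top] by simp
  qed auto
  then have "(\<integral>y. f y \<partial>lborel) = 0"
    by (simp add: interval_lebesgue_integral_def set_lebesgue_integral_def)
  moreover have "(\<integral>y. f y \<partial>lborel) = (1 - 2 * p) * pvii_mass p + 2 * p * pvii_mass (p + 1)"
    unfolding f_def pvii_mass_def using int by simp
  ultimately show ?thesis using p by (simp add: field_simps)
qed

lemma psi_sq_eq_pvii_kernel: "(psi y)\<^sup>2 = pvii_kernel 1 y - pvii_kernel 2 y"
proof -
  define z where "z = 1 + y\<^sup>2"
  have "z \<noteq> 0" "y\<^sup>2 = z - 1" unfolding z_def by simp_all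
  then have "(psi y)\<^sup>2 = 1 / z - 1 / z\<^sup>2"
    unfolding psi_def z_def[symmetric] by (simp add: power_divide field_simps power2_eq_square)
  then show ?thesis by (simp add: pvii_kernel_def z_def powr_minus divide_inverse)
qed

lemma psi_deriv_eq_pvii_kernel: "psi_deriv y = 2 * pvii_kernel 2 y - pvii_kernel 1 y"
proof -
  define z where "z = 1 + y\<^sup>2"
  have "z \<noteq> 0" "y\<^sup>2 = z - 1" unfolding z_def by simp_all
  then have "psi_deriv y = 2 / z\<^sup>2 - 1 / z"
    unfolding psi_deriv_def z_def[symmetric] by (simp add: field_simps power2_eq_square)
  then show ?thesis by (simp add: pvii_kernel_def z_def powr_minus divide_inverse)
qed

lemma integral_pvii_kernel_psi_shift_minus:
  "(\<integral>y. pvii_kernel p y * psi (y + t) \<partial>lborel) = - (\<integral>y. pvii_kernel p y * psi (y - t) \<partial>lborel)"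
proof -
  have "(\<integral>y. pvii_kernel p y * psi (y + t) \<partial>lborel)
      = (\<integral>y. pvii_kernel p (0 + (-1) * y) * psi (0 + (-1) * y + t) \<partial>lborel)"
    using lborel_integral_real_affine[of "-1" "\<lambda>y. pvii_kernel p y * psi (y + t)" 0] by simp
  also have "\<dots> = (\<integral>y. - (pvii_kernel p y * psi (y - t)) \<partial>lborel)"
    using psi_minus[of "y - t" for y] by (simp add: pvii_kernel_minus)
  finally show ?thesis by simp
qed

lemma integral_pvii_kernel_psi: "(\<integral>y. pvii_kernel p y * psi y \<partial>lborel) = 0"
  using integral_pvii_kernel_psi_shift_minus[of p 0] by simp

lemma integral_pvii_kernel_psi_sq:
  assumes "p > 1/2"
  shows "(\<integral>y. pvii_kernel p y * (psi y)\<^sup>2 \<partial>lborel) = pvii_mass (p + 1) - pvii_mass (p + 2)"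
  using assms integrable_pvii_kernel[of "p + 1"] integrable_pvii_kernel[of "p + 2"]
  by (simp add: psi_sq_eq_pvii_kernel right_diff_distrib pvii_kernel_mult pvii_mass_def)

lemma integral_pvii_kernel_psi_deriv:
  assumes "p > 1/2"
  shows "(\<integral>y. pvii_kernel p y * psi_deriv y \<partial>lborel) = 2 * pvii_mass (p + 2) - pvii_mass (p + 1)"
  using assms integrable_pvii_kernel[of "p + 1"] integrable_pvii_kernel[of "p + 2"]
  by (simp add: psi_deriv_eq_pvii_kernel right_diff_distrib distrib_left pvii_kernel_mult
      pvii_mass_def mult.left_commute[of _ 2])

definition score_var :: "real \<Rightarrow> real" where
  "score_var m = (2 * m - 1) / (4 * m * (m + 1))"

definition score_slope :: "real \<Rightarrow> real" where
  "score_slope m = (2 * m - 1) / (2 * (m + 1))"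

lemma score_slope_pos: "m > 1/2 \<Longrightarrow> score_slope m > 0"
  unfolding score_slope_def by simp

lemma score_var_div_score_slope_sq:
  "m > 1/2 \<Longrightarrow> score_var m / (score_slope m)\<^sup>2 = (m + 1) / (m * (2 * m - 1))"
  unfolding score_var_def score_slope_def
  by (simp add: divide_simps) (simp add: algebra_simps power2_eq_square)

lemma pvii_mass_add_2:
  assumes m: "m > 1/2"
  shows "pvii_mass (m + 2) = (2 * m + 1) / (2 * m + 2) * ((2 * m - 1) / (2 * m) * pvii_mass m)"
proof -
  have "pvii_mass (m + 2) = (2 * m + 1) / (2 * m + 2) * pvii_mass (m + 1)"
    using pvii_mass_add_1[of "m + 1"] m by (simp add: add.assoc algebra_simps)
  then show ?thesis using pvii_mass_add_1[OF m] by simp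
qed

lemma pvii_const_mult_integral_psi_sq:
  assumes m: "m > 1/2"
  shows "pvii_const m * (\<integral>y. pvii_kernel m y * (psi y)\<^sup>2 \<partial>lborel) = score_var m"
proof -
  define q where "q = (2 * m - 1) / (2 * m)"
  define r where "r = (2 * m + 1) / (2 * m + 2)"
  have r: "1 - r = 1 / (2 * m + 2)" unfolding r_def using m by (simp add: divide_simps)
  have "q * (1 - r) = score_var m" unfolding r q_def score_var_def using m by (simp add: divide_simps)
  moreover have "pvii_mass (m + 1) - pvii_mass (m + 2) = q * (1 - r) * pvii_mass m"
    unfolding pvii_mass_add_2[OF m] pvii_mass_add_1[OF m] q_def r_def by (simp add: algebra_simps)
  ultimately show ?thesis
    using pvii_mass_pos[OF m] unfolding integral_pvii_kernel_psi_sq[OF m] pvii_const_eq by simp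
qed

lemma pvii_const_mult_integral_psi_deriv:
  assumes m: "m > 1/2"
  shows "pvii_const m * (\<integral>y. pvii_kernel m y * psi_deriv y \<partial>lborel) = score_slope m"
proof -
  define q where "q = (2 * m - 1) / (2 * m)"
  define r where "r = (2 * m + 1) / (2 * m + 2)"
  have r: "2 * r - 1 = 2 * m / (2 * m + 2)" unfolding r_def using m by (simp add: divide_simps)
  have "q * (2 * r - 1) = score_slope m" unfolding r q_def score_slope_def using m by (simp add: divide_simps)
  moreover have "2 * pvii_mass (m + 2) - pvii_mass (m + 1) = q * (2 * r - 1) * pvii_mass m"
    unfolding pvii_mass_add_2[OF m] pvii_mass_add_1[OF m] q_def r_def by (simp add: algebra_simps)
  ultimately show ?thesis
    using pvii_mass_pos[OF m] unfolding integral_pvii_kernel_psi_deriv[OF m] pvii_const_eq by simp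
qed

section \<open>The drift of the shifted score\<close>

lemma integral_pvii_kernel_psi_shift_eq:
  assumes p: "p > 1/2"
  shows "2 * (\<integral>y. pvii_kernel p y * psi (y - t) \<partial>lborel)
    = (\<integral>v. psi v * (pvii_kernel p (t + v) - pvii_kernel p (v - t)) \<partial>lborel)"
proof -
  have int1: "integrable lborel (\<lambda>v. pvii_kernel p (t + v) * psi v)"
    by (rule integrable_mult_bounded[OF integrable_pvii_kernel_shift[OF p] _ abs_psi_le]) simp
  have int2: "integrable lborel (\<lambda>v. pvii_kernel p (v - t) * psi v)"
    using integrable_mult_bounded[OF integrable_pvii_kernel_shift[OF p, of "-t"] _ abs_psi_le] by simp
  have sym: "(\<integral>y. pvii_kernel p y * psi (y - t) \<partial>lborel) = (\<integral>v. pvii_kernel p (t + v) * psi v \<partial>lborel)"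
    using lborel_integral_real_affine[of 1 "\<lambda>y. pvii_kernel p y * psi (y - t)" t] by simp
  also have "\<dots> = (\<integral>v. pvii_kernel p (t + (-1) * v) * psi ((-1) * v) \<partial>lborel)"
    using lborel_integral_real_affine[of "-1" "\<lambda>v. pvii_kernel p (t + v) * psi v" 0] by simp
  also have "\<dots> = - (\<integral>v. pvii_kernel p (v - t) * psi v \<partial>lborel)"
    using pvii_kernel_diff_commute[of p t] by (simp add: psi_minus)
  finally have refl: "(\<integral>y. pvii_kernel p y * psi (y - t) \<partial>lborel) = - (\<integral>v. pvii_kernel p (v - t) * psi v \<partial>lborel)" .
  have "(\<integral>v. psi v * (pvii_kernel p (t + v) - pvii_kernel p (v - t)) \<partial>lborel)
      = (\<integral>v. pvii_kernel p (t + v) * psi v - pvii_kernel p (v - t) * psi v \<partial>lborel)"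
    by (simp add: algebra_simps)
  also have "\<dots> = (\<integral>v. pvii_kernel p (t + v) * psi v \<partial>lborel) - (\<integral>v. pvii_kernel p (v - t) * psi v \<partial>lborel)"
    using int1 int2 by (rule Bochner_Integration.integral_diff)
  finally show ?thesis using sym refl by simp
qed

lemma psi_mult_pvii_kernel_diff_le:
  assumes p: "p > 0" and t: "0 < \<delta>" "\<delta> \<le> t" "t \<le> K"
  shows "psi v * (pvii_kernel p (t + v) - pvii_kernel p (v - t))
    \<le> - (8/5 * p * \<delta> * (1 + (2 + K)\<^sup>2) powr (-p - 1)) * indicator {1..2} v"
proof (cases "v \<in> {1..2}")
  case True
  then have v: "1 \<le> v" "v \<le> 2" by auto
  define A where "A = 1 + (v - t)\<^sup>2"
  define B where "B = 1 + (t + v)\<^sup>2"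
  define Bm where "Bm = (1 + (2 + K)\<^sup>2) powr (-p - 1)"
  have AB: "A \<le> B" "B - A = 4 * v * t"
    unfolding A_def B_def using v t by (simp_all add: power2_eq_square algebra_simps)
  have "p * B powr (-p - 1) * (B - A) \<le> pvii_kernel p (v - t) - pvii_kernel p (t + v)"
    unfolding pvii_kernel_def A_def[symmetric] B_def[symmetric]
    using p AB by (intro powr_neg_diff_ge) (auto simp: A_def)
  moreover have "Bm \<le> B powr (-p - 1)"
    unfolding Bm_def B_def using p v t by (intro powr_mono2' add_left_mono power_mono) auto
  moreover have "4 * \<delta> \<le> B - A"
    using mult_mono[of 1 v \<delta> t] v t unfolding AB by simp
  ultimately have "p * Bm * (4 * \<delta>) \<le> pvii_kernel p (v - t) - pvii_kernel p (t + v)"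
    using p t by (smt (verit) Bm_def mult_left_mono mult_mono powr_ge_zero zero_le_mult_iff)
  moreover have "2/5 \<le> psi v" using psi_ge_two_fifths v by auto
  ultimately have "2/5 * (p * Bm * (4 * \<delta>)) \<le> psi v * (pvii_kernel p (v - t) - pvii_kernel p (t + v))"
    using p t by (intro mult_mono) (auto simp: Bm_def)
  then show ?thesis using True by (simp add: Bm_def algebra_simps)
next
  case False
  have "psi v * (pvii_kernel p (t + v) - pvii_kernel p (v - t)) \<le> 0"
  proof (cases "v \<ge> 0")
    case True
    then have "pvii_kernel p (t + v) \<le> pvii_kernel p (v - t)"
      using p t by (intro pvii_kernel_antimono) (auto simp: power2_eq_square algebra_simps)
    then show ?thesis using psi_nonneg[OF True] by (simp add: mult_nonneg_nonpos)
  next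
    case False
    have "t * v \<le> 0" using False t by (intro mult_nonneg_nonpos) auto
    then have "pvii_kernel p (v - t) \<le> pvii_kernel p (t + v)"
      using p by (intro pvii_kernel_antimono) (auto simp: power2_eq_square algebra_simps)
    moreover have "psi v \<le> 0" using psi_pos[of "-v"] False psi_minus[of v] by simp
    ultimately show ?thesis by (simp add: mult_nonpos_nonneg)
  qed
  then show ?thesis using False by simp
qed

lemma integral_pvii_kernel_psi_shift_le:
  assumes p: "p > 1/2" and t: "0 < \<delta>" "\<delta> \<le> t" "t \<le> K"
  shows "(\<integral>y. pvii_kernel p y * psi (y - t) \<partial>lborel) \<le> - (4/5 * p * \<delta> * (1 + (2 + K)\<^sup>2) powr (-p - 1))"
proof -
  define \<alpha> where "\<alpha> = 8/5 * p * \<delta> * (1 + (2 + K)\<^sup>2) powr (-p - 1)"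
  have int: "integrable lborel (\<lambda>v. psi v * (pvii_kernel p (t + v) - pvii_kernel p (v - t)))"
    using integrable_mult_bounded[OF integrable_pvii_kernel_shift[OF p, of t] _ abs_psi_le]
      integrable_mult_bounded[OF integrable_pvii_kernel_shift[OF p, of "-t"] _ abs_psi_le]
    by (simp add: algebra_simps)
  have "2 * (\<integral>y. pvii_kernel p y * psi (y - t) \<partial>lborel) \<le> (\<integral>v. - \<alpha> * indicator {1..2::real} v \<partial>lborel)"
    unfolding integral_pvii_kernel_psi_shift_eq[OF p]
    using psi_mult_pvii_kernel_diff_le[of p \<delta> t K] p t int
    by (intro integral_mono) (auto simp: \<alpha>_def)
  also have "\<dots> = - \<alpha>" by simp
  finally show ?thesis unfolding \<alpha>_def by simp
qed

section \<open>Maximisers of the likelihood\<close>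

lemma pvii_likelihood_le_iff:
  fixes x :: "nat \<Rightarrow> real"
  assumes "m > 1/2"
  shows "(\<Prod>i<n. pvii_density m (x i - t)) \<le> (\<Prod>i<n. pvii_density m (x i - s))
    \<longleftrightarrow> (\<Prod>i<n. 1 + (x i - s)\<^sup>2) \<le> (\<Prod>i<n. 1 + (x i - t)\<^sup>2)"
proof -
  have c: "pvii_const m > 0" using pvii_mass_pos[OF assms] by (simp add: pvii_const_eq)
  have "(\<Prod>i<n. pvii_density m (x i - u)) = pvii_const m ^ n * (\<Prod>i<n. 1 + (x i - u)\<^sup>2) powr (- m)" for u
    by (simp add: pvii_density_eq pvii_kernel_def prod.distrib prod_powr_distrib)
  moreover have "0 < (\<Prod>i<n. 1 + (x i - u)\<^sup>2)" for u by (intro prod_pos) simp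
  moreover have "a powr (- m) \<le> b powr (- m) \<longleftrightarrow> b \<le> a" if "0 < a" "0 < b" for a b :: real
    using powr_less_mono2_neg[of "- m" a b] powr_less_mono2_neg[of "- m" b a] that assms
    by (cases a b rule: linorder_cases) auto
  ultimately show ?thesis using c by simp
qed

text \<open>The derivative of \<open>s \<mapsto> ln (\<Prod>i<n. 1 + (x i - s)\<^sup>2)\<close> is \<open>-2 \<cdot> (\<Sum>i<n. psi (x i - s))\<close>.\<close>
lemma sum_psi_eq_0_of_prod_min:
  fixes x :: "nat \<Rightarrow> real"
  assumes min: "\<And>t. (\<Prod>i<n. 1 + (x i - s)\<^sup>2) \<le> (\<Prod>i<n. 1 + (x i - t)\<^sup>2)"
  shows "(\<Sum>i<n. psi (x i - s)) = 0"
proof -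
  define L where "L t = (\<Sum>i<n. ln (1 + (x i - t)\<^sup>2))" for t
  have L: "L t = ln (\<Prod>i<n. 1 + (x i - t)\<^sup>2)" for t
    unfolding L_def by (subst ln_prod) auto
  have "0 < (\<Prod>i<n. 1 + (x i - t)\<^sup>2)" for t by (intro prod_pos) simp
  then have "L s \<le> L t" for t
    unfolding L using min[of t] by simp
  moreover have "(L has_real_derivative (\<Sum>i<n. (2 * (x i - s) * (-1)) / (1 + (x i - s)\<^sup>2))) (at s)"
    unfolding L_def by (intro DERIV_sum derivative_eq_intros refl) auto
  ultimately have "(\<Sum>i<n. (2 * (x i - s) * (-1)) / (1 + (x i - s)\<^sup>2)) = 0"
    by (intro DERIV_local_min[where d=1]) auto
  moreover have "(\<Sum>i<n. (2 * (x i - s) * (-1)) / (1 + (x i - s)\<^sup>2)) = -2 * (\<Sum>i<n. psi (x i - s))"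
    unfolding psi_def by (simp add: sum_distrib_left sum_negf)
  ultimately show ?thesis by simp
qed

lemma one_plus_sq_mult_shift_ge: "(1 + T\<^sup>2) / 2 \<le> (1 + (y - T)\<^sup>2) * (1 + (y::real)\<^sup>2)"
proof -
  have "2 * ((1 + (y - T)\<^sup>2) * (1 + y\<^sup>2)) - (1 + T\<^sup>2) = 1 + (T - 2 * y)\<^sup>2 + 2 * ((T - y) * y)\<^sup>2"
    by (simp add: power2_eq_square algebra_simps)
  moreover have "0 \<le> 1 + (T - 2 * y)\<^sup>2 + 2 * ((T - y) * y)\<^sup>2" by simp
  ultimately have "1 + T\<^sup>2 \<le> 2 * ((1 + (y - T)\<^sup>2) * (1 + y\<^sup>2))" by linarith
  then show ?thesis by simp
qed

text \<open>Multiply the \<open>n\<close> instances of \<open>one_plus_sq_mult_shift_ge\<close> and take \<open>n\<close>-th roots.\<close>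
lemma sq_le_of_prod_shift_le:
  fixes y :: "nat \<Rightarrow> real"
  assumes le: "(\<Prod>i<n. 1 + (y i - T)\<^sup>2) \<le> (\<Prod>i<n. 1 + (y i)\<^sup>2)" and n: "n > 0"
  shows "T\<^sup>2 \<le> 2 * (\<Prod>i<n. (1 + (y i)\<^sup>2) powr (2 / real n))"
proof -
  define P where "P = (\<Prod>i<n. 1 + (y i)\<^sup>2)"
  have P: "P > 0" unfolding P_def by (intro prod_pos) simp
  have "((1 + T\<^sup>2) / 2) ^ n = (\<Prod>i<n. (1 + T\<^sup>2) / 2)" by simp
  also have "\<dots> \<le> (\<Prod>i<n. (1 + (y i - T)\<^sup>2) * (1 + (y i)\<^sup>2))"
    by (intro prod_mono conjI one_plus_sq_mult_shift_ge) (simp add: add_nonneg_nonneg)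
  also have "\<dots> = (\<Prod>i<n. 1 + (y i - T)\<^sup>2) * P" unfolding P_def by (simp add: prod.distrib)
  also have "\<dots> \<le> P * P" using le P unfolding P_def by (intro mult_right_mono) auto
  finally have "(1 + T\<^sup>2) / 2 \<le> (P * P) powr (1 / real n)"
    using n by (intro le_powr_inverse_of_power_le) auto
  also have "(P * P) powr (1 / real n) = P powr (2 / real n)"
    using P by (simp add: powr_mult powr_add[symmetric])
  also have "\<dots> = (\<Prod>i<n. (1 + (y i)\<^sup>2) powr (2 / real n))" unfolding P_def by (rule prod_powr_distrib)
  finally show ?thesis by simp
qed

lemma abs_sum_psi_shift_le:
  assumes "(\<Sum>i<n. psi (y i - T)) = 0" "\<bar>T - t\<bar> \<le> h"
  shows "\<bar>\<Sum>i<n. psi (y i - t)\<bar> \<le> real n * h"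
proof -
  have "\<bar>\<Sum>i<n. psi (y i - t)\<bar> = \<bar>\<Sum>i<n. psi (y i - t) - psi (y i - T)\<bar>"
    using assms(1) by (simp add: sum_subtractf)
  also have "\<dots> \<le> (\<Sum>i<n. \<bar>psi (y i - t) - psi (y i - T)\<bar>)" by (rule sum_abs)
  also have "\<dots> \<le> (\<Sum>i<n. h)"
  proof (rule sum_mono)
    fix i
    have "\<bar>psi (y i - t) - psi (y i - T)\<bar> \<le> \<bar>(y i - t) - (y i - T)\<bar>" by (rule abs_psi_diff_le)
    also have "\<dots> = \<bar>T - t\<bar>" by simp
    finally show "\<bar>psi (y i - t) - psi (y i - T)\<bar> \<le> h" using assms(2) by simp
  qed
  finally show ?thesis by simp
qed

lemma sum_psi_expansion:
  assumes "(\<Sum>i<n. psi (y i - T)) = 0" "\<bar>T\<bar> \<le> 1"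
  obtains R where "(\<Sum>i<n. psi (y i)) = T * ((\<Sum>i<n. psi_deriv (y i)) + R)" "\<bar>R\<bar> \<le> 5 * real n * \<bar>T\<bar>"
proof -
  have "\<exists>r. psi (y i) - psi (y i - T) = T * (psi_deriv (y i) + r) \<and> \<bar>r\<bar> \<le> 5 * \<bar>T\<bar>" for i
    by (rule psi_diff_expansion[OF assms(2), of "y i"]) blast
  then obtain r where r: "\<And>i. psi (y i) - psi (y i - T) = T * (psi_deriv (y i) + r i)" "\<And>i. \<bar>r i\<bar> \<le> 5 * \<bar>T\<bar>"
    by metis
  have "(\<Sum>i<n. psi (y i)) = (\<Sum>i<n. psi (y i) - psi (y i - T))"
    using assms(1) by (simp add: sum_subtractf)
  also have "\<dots> = T * ((\<Sum>i<n. psi_deriv (y i)) + (\<Sum>i<n. r i))"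
    using r(1) by (simp add: sum_distrib_left sum.distrib algebra_simps)
  finally have eq: "(\<Sum>i<n. psi (y i)) = T * ((\<Sum>i<n. psi_deriv (y i)) + (\<Sum>i<n. r i))" .
  have "\<bar>\<Sum>i<n. r i\<bar> \<le> (\<Sum>i<n. \<bar>r i\<bar>)" by (rule sum_abs)
  also have "\<dots> \<le> (\<Sum>i<n. 5 * \<bar>T\<bar>)" using r(2) by (rule sum_mono)
  finally have "\<bar>\<Sum>i<n. r i\<bar> \<le> 5 * real n * \<bar>T\<bar>" by simp
  with eq show thesis by (rule that)
qed

locale pvii_mle = prob_space M for M :: "'a measure" +
  fixes m \<theta> :: real and X :: "nat \<Rightarrow> 'a \<Rightarrow> real" and est :: "nat \<Rightarrow> (nat \<Rightarrow> real) \<Rightarrow> real"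
  assumes m_gt: "m > 1/2"
    and indep: "indep_vars (\<lambda>_. borel) X UNIV"
    and distr: "\<And>i. distributed M lborel (X i) (\<lambda>x. ennreal (pvii_density m (x - \<theta>)))"
    and est_measurable: "\<And>n. est n \<in> borel_measurable (PiM {..<n} (\<lambda>_. lborel))"
    and est_mle: "\<And>n x t. (\<Prod>i<n. pvii_density m (x i - t)) \<le> (\<Prod>i<n. pvii_density m (x i - est n x))"
begin

abbreviation Y :: "nat \<Rightarrow> 'a \<Rightarrow> real" where
  "Y i \<omega> \<equiv> X i \<omega> - \<theta>"

abbreviation c :: real where
  "c \<equiv> pvii_const m"

lemma c_pos: "c > 0"
  unfolding pvii_const_eq using pvii_mass_pos[OF m_gt] by simp

lemma X_measurable [measurable]: "X i \<in> borel_measurable M"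
  using distributed_measurable[OF distr[of i]] by simp

lemma integrable_centered_iff:
  assumes [measurable]: "h \<in> borel_measurable borel"
  shows "integrable M (\<lambda>\<omega>. h (Y i \<omega>)) \<longleftrightarrow> integrable lborel (\<lambda>y. pvii_kernel m y * h y)"
proof -
  have "integrable M (\<lambda>\<omega>. h (Y i \<omega>)) \<longleftrightarrow> integrable lborel (\<lambda>x. pvii_density m (x - \<theta>) * h (x - \<theta>))"
    using distributed_integrable[OF distr[of i], of "\<lambda>x. h (x - \<theta>)"] c_pos
    by (simp add: pvii_density_eq less_imp_le)
  also have "\<dots> \<longleftrightarrow> integrable lborel (\<lambda>x. pvii_density m x * h x)"
    using lborel_integrable_real_affine_iff[of 1 "\<lambda>x. pvii_density m x * h x" "-\<theta>"] by simp
  also have "\<dots> \<longleftrightarrow> integrable lborel (\<lambda>y. pvii_kernel m y * h y)"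
    unfolding pvii_density_eq using c_pos by (simp add: mult.assoc)
  finally show ?thesis .
qed

lemma expectation_centered:
  assumes [measurable]: "h \<in> borel_measurable borel"
  shows "expectation (\<lambda>\<omega>. h (Y i \<omega>)) = c * (\<integral>y. pvii_kernel m y * h y \<partial>lborel)"
proof -
  have "expectation (\<lambda>\<omega>. h (Y i \<omega>)) = (\<integral>x. pvii_density m (x - \<theta>) * h (x - \<theta>) \<partial>lborel)"
    using distributed_integral[OF distr[of i], of "\<lambda>x. h (x - \<theta>)"] c_pos
    by (simp add: pvii_density_eq less_imp_le)
  also have "\<dots> = (\<integral>x. pvii_density m x * h x \<partial>lborel)"
    using lborel_integral_real_affine[of 1 "\<lambda>x. pvii_density m (x - \<theta>) * h (x - \<theta>)" \<theta>] by simp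
  also have "\<dots> = c * (\<integral>y. pvii_kernel m y * h y \<partial>lborel)"
    unfolding pvii_density_eq by (simp add: mult.assoc)
  finally show ?thesis .
qed

lemma indep_vars_centered:
  assumes [measurable]: "\<And>i. h i \<in> borel_measurable borel"
  shows "indep_vars (\<lambda>_. borel) (\<lambda>i \<omega>. h i (Y i \<omega>)) I"
proof -
  have "indep_vars (\<lambda>_. borel) (\<lambda>i \<omega>. (\<lambda>x. h i (x - \<theta>)) (X i \<omega>)) UNIV"
    by (rule indep_vars_compose2[OF indep]) measurable
  then show ?thesis by (rule indep_vars_subset) auto
qed

lemma
  assumes [measurable]: "h \<in> borel_measurable borel"
    and int: "integrable lborel (\<lambda>y. pvii_kernel m y * h y)"
  shows expectation_prod_centered:
      "expectation (\<lambda>\<omega>. \<Prod>i\<in>I. h (Y i \<omega>)) = (c * (\<integral>y. pvii_kernel m y * h y \<partial>lborel)) ^ card I"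
    and integrable_prod_centered: "finite I \<Longrightarrow> integrable M (\<lambda>\<omega>. \<Prod>i\<in>I. h (Y i \<omega>))"
proof -
  have ii: "\<And>i. integrable M (\<lambda>\<omega>. h (Y i \<omega>))" using integrable_centered_iff int by simp
  have ind: "indep_vars (\<lambda>_. borel) (\<lambda>i \<omega>. h (Y i \<omega>)) I" by (rule indep_vars_centered) simp
  show "expectation (\<lambda>\<omega>. \<Prod>i\<in>I. h (Y i \<omega>)) = (c * (\<integral>y. pvii_kernel m y * h y \<partial>lborel)) ^ card I"
  proof (cases "finite I")
    case True
    then show ?thesis using indep_vars_lebesgue_integral[OF _ ind ii] expectation_centered by simp
  qed (simp add: prob_space)
  show "integrable M (\<lambda>\<omega>. \<Prod>i\<in>I. h (Y i \<omega>))" if "finite I"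
    using indep_vars_integrable[OF that ind ii] by simp
qed

lemma expectation_sum_sq_centered:
  assumes [measurable]: "h \<in> borel_measurable borel"
    and bnd: "\<And>x. \<bar>h x\<bar> \<le> B" and zero: "(\<integral>y. pvii_kernel m y * h y \<partial>lborel) = 0"
  shows "expectation (\<lambda>\<omega>. (\<Sum>i<n. h (Y i \<omega>))\<^sup>2) = real n * (c * (\<integral>y. pvii_kernel m y * (h y)\<^sup>2 \<partial>lborel))"
proof -
  have int: "integrable lborel (\<lambda>y. pvii_kernel m y * h y)"
    by (rule integrable_mult_bounded[OF integrable_pvii_kernel[OF m_gt] _ bnd]) simp
  have intp: "integrable M (\<lambda>\<omega>. h (Y i \<omega>) * h (Y j \<omega>))" for i j
  proof (rule integrable_const_bound[where B="B * B"])
    show "AE \<omega> in M. norm (h (Y i \<omega>) * h (Y j \<omega>)) \<le> B * B"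
      using bnd order_trans[OF abs_ge_zero bnd] by (intro AE_I2) (simp add: abs_mult mult_mono)
  qed simp
  have pair: "expectation (\<lambda>\<omega>. h (Y i \<omega>) * h (Y j \<omega>))
      = (if i = j then c * (\<integral>y. pvii_kernel m y * (h y)\<^sup>2 \<partial>lborel) else 0)" for i j
  proof (cases "i = j")
    case True
    then show ?thesis using expectation_centered[of "\<lambda>y. (h y)\<^sup>2" i] by (simp add: power2_eq_square)
  next
    case False
    then show ?thesis
      using expectation_prod_centered[of h "{i, j}", OF _ int] zero by simp
  qed
  have "expectation (\<lambda>\<omega>. (\<Sum>i<n. h (Y i \<omega>))\<^sup>2)
      = expectation (\<lambda>\<omega>. \<Sum>i<n. \<Sum>j<n. h (Y i \<omega>) * h (Y j \<omega>))"
    by (simp add: power2_eq_square sum_product)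
  also have "\<dots> = (\<Sum>i<n. \<Sum>j<n. expectation (\<lambda>\<omega>. h (Y i \<omega>) * h (Y j \<omega>)))"
    by (simp add: Bochner_Integration.integral_sum intp Bochner_Integration.integrable_sum)
  also have "\<dots> = real n * (c * (\<integral>y. pvii_kernel m y * (h y)\<^sup>2 \<partial>lborel))"
    unfolding pair by simp
  finally show ?thesis .
qed

lemma
  assumes [measurable]: "h \<in> borel_measurable borel"
    and ab: "\<And>x. a \<le> h x \<and> h x \<le> b" and "a < b" "n > 0" "\<epsilon> \<ge> 0"
  defines "\<mu> \<equiv> c * (\<integral>y. pvii_kernel m y * h y \<partial>lborel)"
  shows prob_sum_centered_ge: "prob {\<omega>\<in>space M. (\<Sum>i<n. h (Y i \<omega>)) \<ge> real n * \<mu> + \<epsilon>}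
      \<le> exp (-2 * \<epsilon>\<^sup>2 / (real n * (b - a)\<^sup>2))"
    and prob_sum_centered_le: "prob {\<omega>\<in>space M. (\<Sum>i<n. h (Y i \<omega>)) \<le> real n * \<mu> - \<epsilon>}
      \<le> exp (-2 * \<epsilon>\<^sup>2 / (real n * (b - a)\<^sup>2))"
    and prob_abs_sum_centered_ge: "prob {\<omega>\<in>space M. \<bar>(\<Sum>i<n. h (Y i \<omega>)) - real n * \<mu>\<bar> \<ge> \<epsilon>}
      \<le> 2 * exp (-2 * \<epsilon>\<^sup>2 / (real n * (b - a)\<^sup>2))"
proof -
  interpret H: Hoeffding_ineq M "{..<n}" "\<lambda>i \<omega>. h (Y i \<omega>)" "\<lambda>_. a" "\<lambda>_. b" "real n * \<mu>"
  proof unfold_locales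
    show "indep_vars (\<lambda>_. borel) (\<lambda>i \<omega>. h (Y i \<omega>)) {..<n}" by (rule indep_vars_centered) simp
    show "AE \<omega> in M. h (Y i \<omega>) \<in> {a..b}" for i using ab by auto
    show "real n * \<mu> \<equiv> \<Sum>i<n. expectation (\<lambda>\<omega>. h (Y i \<omega>))"
      unfolding \<mu>_def using expectation_centered by simp
  qed simp
  have pos: "(\<Sum>i<n. (b - a)\<^sup>2) > 0" using \<open>a < b\<close> \<open>n > 0\<close> by simp
  have eq: "(\<Sum>i<n. (b - a)\<^sup>2) = real n * (b - a)\<^sup>2" by simp
  show "prob {\<omega>\<in>space M. (\<Sum>i<n. h (Y i \<omega>)) \<ge> real n * \<mu> + \<epsilon>} \<le> exp (-2 * \<epsilon>\<^sup>2 / (real n * (b - a)\<^sup>2))"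
    using H.Hoeffding_ineq_ge[OF \<open>\<epsilon> \<ge> 0\<close> pos] unfolding eq .
  show "prob {\<omega>\<in>space M. (\<Sum>i<n. h (Y i \<omega>)) \<le> real n * \<mu> - \<epsilon>} \<le> exp (-2 * \<epsilon>\<^sup>2 / (real n * (b - a)\<^sup>2))"
    using H.Hoeffding_ineq_le[OF \<open>\<epsilon> \<ge> 0\<close> pos] unfolding eq .
  show "prob {\<omega>\<in>space M. \<bar>(\<Sum>i<n. h (Y i \<omega>)) - real n * \<mu>\<bar> \<ge> \<epsilon>} \<le> 2 * exp (-2 * \<epsilon>\<^sup>2 / (real n * (b - a)\<^sup>2))"
    using H.Hoeffding_ineq_abs_ge[OF \<open>\<epsilon> \<ge> 0\<close> pos] unfolding eq .
qed

definition mle_err :: "nat \<Rightarrow> 'a \<Rightarrow> real" where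
  "mle_err n \<omega> = est n (restrict (\<lambda>i. X i \<omega>) {..<n}) - \<theta>"

definition score :: "nat \<Rightarrow> 'a \<Rightarrow> real" where
  "score n \<omega> = (\<Sum>i<n. psi (Y i \<omega>))"

definition score_deriv :: "nat \<Rightarrow> 'a \<Rightarrow> real" where
  "score_deriv n \<omega> = (\<Sum>i<n. psi_deriv (Y i \<omega>))"

definition envelope :: "nat \<Rightarrow> 'a \<Rightarrow> real" where
  "envelope n \<omega> = 2 * (\<Prod>i<n. (1 + (Y i \<omega>)\<^sup>2) powr (2 / real n))"

lemma mle_err_measurable [measurable]: "mle_err n \<in> borel_measurable M"
proof -
  have "(\<lambda>\<omega>. restrict (\<lambda>i. X i \<omega>) {..<n}) \<in> measurable M (PiM {..<n} (\<lambda>_. lborel))"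
    by (rule measurable_restrict) simp
  from measurable_comp[OF this est_measurable[of n]] show ?thesis
    unfolding mle_err_def by (simp add: comp_def)
qed

lemma score_measurable [measurable]: "score n \<in> borel_measurable M"
  unfolding score_def by measurable

lemma score_deriv_measurable [measurable]: "score_deriv n \<in> borel_measurable M"
  unfolding score_deriv_def by measurable

lemma envelope_measurable [measurable]: "envelope n \<in> borel_measurable M"
  unfolding envelope_def by measurable

lemma prod_mle_err_le: "(\<Prod>i<n. 1 + (Y i \<omega> - mle_err n \<omega>)\<^sup>2) \<le> (\<Prod>i<n. 1 + (Y i \<omega> - t)\<^sup>2)"
proof -
  define x where "x = restrict (\<lambda>i. X i \<omega>) {..<n}"
  have "(\<Prod>i<n. 1 + (x i - est n x)\<^sup>2) \<le> (\<Prod>i<n. 1 + (x i - (t + \<theta>))\<^sup>2)"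
    using est_mle pvii_likelihood_le_iff[OF m_gt] by blast
  moreover have "(\<Prod>i<n. 1 + (x i - u)\<^sup>2) = (\<Prod>i<n. 1 + (X i \<omega> - u)\<^sup>2)" for u
    unfolding x_def by (intro prod.cong) auto
  ultimately show ?thesis unfolding mle_err_def x_def by (simp add: algebra_simps)
qed

lemma sum_psi_mle_err: "(\<Sum>i<n. psi (Y i \<omega> - mle_err n \<omega>)) = 0"
  using sum_psi_eq_0_of_prod_min[where x="\<lambda>i. Y i \<omega>"] prod_mle_err_le by blast

lemma mle_err_sq_le_envelope: "n > 0 \<Longrightarrow> (mle_err n \<omega>)\<^sup>2 \<le> envelope n \<omega>"
  unfolding envelope_def using prod_mle_err_le[where t=0] by (intro sq_le_of_prod_shift_le) auto

lemma envelope_nonneg: "0 \<le> envelope n \<omega>"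
  unfolding envelope_def by (simp add: prod_nonneg)

definition moment :: "real \<Rightarrow> real" where
  "moment s = c * pvii_mass (m - s)"

definition moment_exp :: real where
  "moment_exp = (m - 1/2) / 2"

lemma moment_exp_pos: "moment_exp > 0"
  unfolding moment_exp_def using m_gt by simp

lemma moment_exp_admissible: "m - moment_exp > 1/2"
  unfolding moment_exp_def using m_gt by (simp add: field_simps)

lemma moment_nonneg: "moment s \<ge> 0"
  unfolding moment_def pvii_mass_def using c_pos
  by (simp add: Bochner_Integration.integral_nonneg less_imp_le)

lemma
  assumes "m - s > 1/2"
  shows expectation_prod_powr: "expectation (\<lambda>\<omega>. \<Prod>i<n. (1 + (Y i \<omega>)\<^sup>2) powr s) = moment s ^ n"
    and integrable_prod_powr: "integrable M (\<lambda>\<omega>. \<Prod>i<n. (1 + (Y i \<omega>)\<^sup>2) powr s)"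
proof -
  have kernel: "pvii_kernel m y * (1 + y\<^sup>2) powr s = pvii_kernel (m - s) y" for y
    using pvii_kernel_mult[of m y "-s"] by (simp add: pvii_kernel_def)
  have int: "integrable lborel (\<lambda>y. pvii_kernel m y * (1 + y\<^sup>2) powr s)"
    unfolding kernel using assms by (rule integrable_pvii_kernel)
  show "expectation (\<lambda>\<omega>. \<Prod>i<n. (1 + (Y i \<omega>)\<^sup>2) powr s) = moment s ^ n"
    using expectation_prod_centered[of "\<lambda>y. (1 + y\<^sup>2) powr s" "{..<n}", OF _ int]
    unfolding kernel moment_def pvii_mass_def by simp
  show "integrable M (\<lambda>\<omega>. \<Prod>i<n. (1 + (Y i \<omega>)\<^sup>2) powr s)"
    using integrable_prod_centered[of "\<lambda>y. (1 + y\<^sup>2) powr s" "{..<n}", OF _ int] by simp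
qed

lemma moment_le_chord:
  assumes s: "0 \<le> s" "s \<le> moment_exp"
  shows "moment s \<le> 1 + (s / moment_exp) * (moment moment_exp - 1)"
proof -
  have adm: "m - s > 1/2" using moment_exp_admissible s by linarith
  let ?Z = "\<lambda>s \<omega>. (1 + (Y 0 \<omega>)\<^sup>2) powr s"
  have "moment s = expectation (?Z s)"
    using expectation_prod_powr[OF adm, of 1] by simp
  also have "\<dots> \<le> expectation (\<lambda>\<omega>. 1 + (s / moment_exp) * (?Z moment_exp \<omega> - 1))"
    using integrable_prod_powr[OF adm, of 1] integrable_prod_powr[OF moment_exp_admissible, of 1]
      s moment_exp_pos
    by (intro integral_mono powr_le_chord) auto
  also have "\<dots> = 1 + (s / moment_exp) * (moment moment_exp - 1)"
    using integrable_prod_powr[OF moment_exp_admissible, of 1]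
      expectation_prod_powr[OF moment_exp_admissible, of 1] prob_space
    by (simp add: algebra_simps)
  finally show ?thesis .
qed

lemma envelope_powr:
  "(envelope n \<omega> / 2) powr r = (\<Prod>i<n. (1 + (Y i \<omega>)\<^sup>2) powr (2 * r / real n))"
  unfolding envelope_def by (simp add: prod_powr_distrib[symmetric] powr_powr prod_nonneg)

lemma envelope_sq:
  "(envelope n \<omega>)\<^sup>2 = 4 * (\<Prod>i<n. (1 + (Y i \<omega>)\<^sup>2) powr (4 / real n))"
proof -
  have "(envelope n \<omega>)\<^sup>2 = 4 * (envelope n \<omega> / 2) powr 2"
    using envelope_nonneg[of n \<omega>] by (simp add: powr_numeral power_divide)
  then show ?thesis unfolding envelope_powr by simp
qed

text \<open>The bound is uniform in \<open>n\<close> because, by \<open>moment_le_chord\<close>, the factors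
  \<open>E (1 + Y\<^sup>2) powr (4/n)\<close> are \<open>1 + O(1/n)\<close>.\<close>
lemma
  assumes n: "n > 0" "4 / real n \<le> moment_exp"
  shows integrable_envelope_sq: "integrable M (\<lambda>\<omega>. (envelope n \<omega>)\<^sup>2)"
    and expectation_envelope_sq_le:
      "expectation (\<lambda>\<omega>. (envelope n \<omega>)\<^sup>2) \<le> 4 * exp (4 * (moment moment_exp - 1) / moment_exp)"
proof -
  have adm: "m - 4 / real n > 1/2" using n moment_exp_admissible by linarith
  show "integrable M (\<lambda>\<omega>. (envelope n \<omega>)\<^sup>2)"
    unfolding envelope_sq using integrable_prod_powr[OF adm] by simp
  define x where "x = 4 * (moment moment_exp - 1) / moment_exp"
  have "moment (4 / real n) \<le> 1 + x / real n"
    using moment_le_chord[of "4 / real n"] n unfolding x_def by (simp add: field_simps)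
  moreover have "0 \<le> 1 + x / real n"
    using calculation moment_nonneg[of "4 / real n"] by linarith
  then have "x \<ge> - real n" using n by (simp add: field_simps)
  ultimately have "moment (4 / real n) ^ n \<le> exp x"
    using moment_nonneg n by (intro order_trans[OF power_mono exp_ge_one_plus_x_over_n_power_n]) auto
  then show "expectation (\<lambda>\<omega>. (envelope n \<omega>)\<^sup>2) \<le> 4 * exp x"
    unfolding envelope_sq using expectation_prod_powr[OF adm] by simp
qed

lemma integrable_envelope:
  assumes "n > 0" "2 / real n \<le> moment_exp"
  shows "integrable M (envelope n)"
proof -
  have "m - 2 / real n > 1/2" using assms moment_exp_admissible by linarith
  then show ?thesis unfolding envelope_def using integrable_prod_powr by simp
qed

lemma prob_envelope_ge:
  assumes n: "n > 0" and K: "K > 0"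
  shows "prob {\<omega>\<in>space M. K\<^sup>2 \<le> envelope n \<omega>} \<le> (moment moment_exp / (K\<^sup>2 / 2) powr (moment_exp / 2)) ^ n"
proof -
  define r where "r = real n * moment_exp / 2"
  define Z where "Z \<omega> = (\<Prod>i<n. (1 + (Y i \<omega>)\<^sup>2) powr moment_exp)" for \<omega>
  have r: "r > 0" unfolding r_def using n moment_exp_pos by simp
  have Z: "(envelope n \<omega> / 2) powr r = Z \<omega>" for \<omega>
    unfolding envelope_powr Z_def r_def using n by simp
  have "{\<omega>\<in>space M. K\<^sup>2 \<le> envelope n \<omega>} \<subseteq> {\<omega>\<in>space M. (K\<^sup>2 / 2) powr r \<le> Z \<omega>}"
    using r K by (auto simp flip: Z intro!: powr_mono2)
  then have "prob {\<omega>\<in>space M. K\<^sup>2 \<le> envelope n \<omega>} \<le> prob {\<omega>\<in>space M. (K\<^sup>2 / 2) powr r \<le> Z \<omega>}"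
    by (intro finite_measure_mono) (auto simp: Z_def)
  also have "\<dots> \<le> expectation Z / (K\<^sup>2 / 2) powr r"
  proof (rule integral_Markov_inequality_measure[OF _ sets.top])
    show "integrable M Z" unfolding Z_def by (rule integrable_prod_powr[OF moment_exp_admissible])
    show "AE \<omega> in M. 0 \<le> Z \<omega>" unfolding Z_def by (simp add: prod_nonneg)
  qed (use K in simp)
  also have "(K\<^sup>2 / 2) powr r = ((K\<^sup>2 / 2) powr (moment_exp / 2)) powr real n"
    unfolding r_def by (simp add: powr_powr mult_ac)
  also have "\<dots> = ((K\<^sup>2 / 2) powr (moment_exp / 2)) ^ n"
    using K by (simp add: powr_realpow)
  also have "expectation Z / \<dots> = (moment moment_exp / (K\<^sup>2 / 2) powr (moment_exp / 2)) ^ n"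
    using expectation_prod_powr[OF moment_exp_admissible, of n] unfolding Z_def by (simp add: power_divide)
  finally show ?thesis .
qed

section \<open>Consistency at an exponential rate\<close>

definition drift :: "real \<Rightarrow> real \<Rightarrow> real" where
  "drift \<delta> K = c * (4/5 * m * \<delta> * (1 + (2 + K)\<^sup>2) powr (- m - 1))"

lemma drift_pos: "\<delta> > 0 \<Longrightarrow> drift \<delta> K > 0"
  unfolding drift_def using c_pos m_gt by simp

lemma abs_expectation_psi_shift_ge:
  assumes "0 < \<delta>" "\<delta> \<le> \<bar>t\<bar>" "\<bar>t\<bar> \<le> K"
  shows "drift \<delta> K \<le> \<bar>c * (\<integral>y. pvii_kernel m y * psi (y - t) \<partial>lborel)\<bar>"
proof -
  have "c * (\<integral>y. pvii_kernel m y * psi (y - \<bar>t\<bar>) \<partial>lborel) \<le> - drift \<delta> K"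
    using mult_left_mono[OF integral_pvii_kernel_psi_shift_le[OF m_gt assms], of c] c_pos
    unfolding drift_def by simp
  moreover have "(\<integral>y. pvii_kernel m y * psi (y - t) \<partial>lborel) = (\<integral>y. pvii_kernel m y * psi (y - \<bar>t\<bar>) \<partial>lborel)
      \<or> (\<integral>y. pvii_kernel m y * psi (y - t) \<partial>lborel) = - (\<integral>y. pvii_kernel m y * psi (y - \<bar>t\<bar>) \<partial>lborel)"
    using integral_pvii_kernel_psi_shift_minus[of m "\<bar>t\<bar>"] by (cases "t \<ge> 0") auto
  ultimately show ?thesis by auto
qed

text \<open>Hoeffding's inequality, applied on the side of the mean given by its sign.\<close>
lemma prob_abs_sum_small:
  assumes [measurable]: "h \<in> borel_measurable borel"
    and ab: "\<And>x. a \<le> h x \<and> h x \<le> b" and "a < b" "n > 0" "0 \<le> \<kappa>"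
    and \<kappa>: "\<kappa> \<le> \<bar>c * (\<integral>y. pvii_kernel m y * h y \<partial>lborel)\<bar>"
  shows "prob {\<omega>\<in>space M. \<bar>\<Sum>i<n. h (Y i \<omega>)\<bar> \<le> real n * \<kappa> / 2}
    \<le> exp (- (real n * \<kappa>\<^sup>2 / (2 * (b - a)\<^sup>2)))"
proof -
  define \<mu> where "\<mu> = c * (\<integral>y. pvii_kernel m y * h y \<partial>lborel)"
  have e: "0 \<le> real n * \<kappa> / 2" using \<open>0 \<le> \<kappa>\<close> by simp
  have "(b - a)\<^sup>2 > 0" using \<open>a < b\<close> by simp
  then have exp: "-2 * (real n * \<kappa> / 2)\<^sup>2 / (real n * (b - a)\<^sup>2) = - (real n * \<kappa>\<^sup>2 / (2 * (b - a)\<^sup>2))"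
    using \<open>n > 0\<close> by (simp add: field_simps power2_eq_square[of "real n * \<kappa>"] power2_eq_square[of \<kappa>]
        power2_eq_square[of "real n"])
  let ?small = "{\<omega>\<in>space M. \<bar>\<Sum>i<n. h (Y i \<omega>)\<bar> \<le> real n * \<kappa> / 2}"
  have \<kappa>\<mu>: "real n * \<kappa> \<le> real n * \<bar>\<mu>\<bar>" using \<kappa> unfolding \<mu>_def by (intro mult_left_mono) auto
  consider "?small \<subseteq> {\<omega>\<in>space M. (\<Sum>i<n. h (Y i \<omega>)) \<le> real n * \<mu> - real n * \<kappa> / 2}"
    | "?small \<subseteq> {\<omega>\<in>space M. (\<Sum>i<n. h (Y i \<omega>)) \<ge> real n * \<mu> + real n * \<kappa> / 2}"
  proof (cases "\<mu> \<ge> 0")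
    case True
    with \<kappa>\<mu> have "?small \<subseteq> {\<omega>\<in>space M. (\<Sum>i<n. h (Y i \<omega>)) \<le> real n * \<mu> - real n * \<kappa> / 2}"
      by (auto simp: abs_le_iff)
    then show thesis by (rule that(1))
  next
    case False
    with \<kappa>\<mu> have "?small \<subseteq> {\<omega>\<in>space M. (\<Sum>i<n. h (Y i \<omega>)) \<ge> real n * \<mu> + real n * \<kappa> / 2}"
      by (auto simp: abs_le_iff)
    then show thesis by (rule that(2))
  qed
  then show ?thesis
  proof cases
    case 1
    then have "prob {\<omega>\<in>space M. \<bar>\<Sum>i<n. h (Y i \<omega>)\<bar> \<le> real n * \<kappa> / 2}
        \<le> prob {\<omega>\<in>space M. (\<Sum>i<n. h (Y i \<omega>)) \<le> real n * \<mu> - real n * \<kappa> / 2}"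
      by (intro finite_measure_mono) measurable
    also have "\<dots> \<le> exp (-2 * (real n * \<kappa> / 2)\<^sup>2 / (real n * (b - a)\<^sup>2))"
      unfolding \<mu>_def using ab \<open>a < b\<close> \<open>n > 0\<close> e by (intro prob_sum_centered_le) auto
    finally show ?thesis unfolding exp .
  next
    case 2
    then have "prob {\<omega>\<in>space M. \<bar>\<Sum>i<n. h (Y i \<omega>)\<bar> \<le> real n * \<kappa> / 2}
        \<le> prob {\<omega>\<in>space M. (\<Sum>i<n. h (Y i \<omega>)) \<ge> real n * \<mu> + real n * \<kappa> / 2}"
      by (intro finite_measure_mono) measurable
    also have "\<dots> \<le> exp (-2 * (real n * \<kappa> / 2)\<^sup>2 / (real n * (b - a)\<^sup>2))"
      unfolding \<mu>_def using ab \<open>a < b\<close> \<open>n > 0\<close> e by (intro prob_sum_centered_ge) auto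
    finally show ?thesis unfolding exp .
  qed
qed

lemma prob_score_shift_small:
  assumes "n > 0" "0 < \<delta>" "\<delta> \<le> \<bar>t\<bar>" "\<bar>t\<bar> \<le> K"
  shows "prob {\<omega>\<in>space M. \<bar>\<Sum>i<n. psi (Y i \<omega> - t)\<bar> \<le> real n * drift \<delta> K / 2}
    \<le> exp (- (real n * (drift \<delta> K)\<^sup>2 / 2))"
  using prob_abs_sum_small[of "\<lambda>y. psi (y - t)" "-1/2" "1/2" n "drift \<delta> K"]
    psi_bounds abs_expectation_psi_shift_ge[OF assms(2-4)] drift_pos[OF assms(2)] assms(1)
  by (simp add: less_imp_le)

text \<open>By the Lipschitz bound on \<open>psi\<close>, the score equation at \<open>mle_err\<close> makes the score small at
  the nearest point of a net of mesh \<open>drift \<delta> K / 2\<close>.\<close>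
lemma prob_mle_err_between:
  assumes n: "n > 0" and \<delta>: "0 < \<delta>" "\<delta> < K"
  shows "prob {\<omega>\<in>space M. \<delta> \<le> \<bar>mle_err n \<omega>\<bar> \<and> \<bar>mle_err n \<omega>\<bar> \<le> K}
    \<le> 2 * real (nat \<lceil>2 * (K - \<delta>) / drift \<delta> K\<rceil> + 2) * exp (- (real n * (drift \<delta> K)\<^sup>2 / 2))"
proof -
  define k where "k = drift \<delta> K"
  define A where "A t = {\<omega>\<in>space M. \<bar>\<Sum>i<n. psi (Y i \<omega> - t)\<bar> \<le> real n * k / 2}" for t
  have A [measurable]: "A t \<in> sets M" for t unfolding A_def by measurable
  have "k / 2 > 0" unfolding k_def using drift_pos \<delta> by simp
  then obtain G where G: "finite G" "card G \<le> 2 * (nat \<lceil>2 * (K - \<delta>) / k\<rceil> + 2)"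
    "\<And>g. g \<in> G \<Longrightarrow> \<delta> \<le> \<bar>g\<bar> \<and> \<bar>g\<bar> \<le> K"
    "\<And>t. \<delta> \<le> \<bar>t\<bar> \<Longrightarrow> \<bar>t\<bar> \<le> K \<Longrightarrow> \<exists>g\<in>G. \<bar>t - g\<bar> \<le> k / 2"
    using finite_net_annulus[OF \<delta>, of "k / 2"] by (auto simp: mult.commute)
  have "{\<omega>\<in>space M. \<delta> \<le> \<bar>mle_err n \<omega>\<bar> \<and> \<bar>mle_err n \<omega>\<bar> \<le> K} \<subseteq> (\<Union>g\<in>G. A g)"
  proof safe
    fix \<omega> assume \<omega>: "\<omega> \<in> space M" "\<delta> \<le> \<bar>mle_err n \<omega>\<bar>" "\<bar>mle_err n \<omega>\<bar> \<le> K"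
    then obtain g where "g \<in> G" "\<bar>mle_err n \<omega> - g\<bar> \<le> k / 2" using G(4) by blast
    moreover from this(2) have "\<bar>\<Sum>i<n. psi (Y i \<omega> - g)\<bar> \<le> real n * (k / 2)"
      by (rule abs_sum_psi_shift_le[OF sum_psi_mle_err])
    ultimately show "\<omega> \<in> (\<Union>g\<in>G. A g)" using \<omega>(1) unfolding A_def by auto
  qed
  then have "prob {\<omega>\<in>space M. \<delta> \<le> \<bar>mle_err n \<omega>\<bar> \<and> \<bar>mle_err n \<omega>\<bar> \<le> K} \<le> prob (\<Union>g\<in>G. A g)"
    using G(1) by (intro finite_measure_mono) auto
  also have "\<dots> \<le> (\<Sum>g\<in>G. prob (A g))"
    using G(1) by (intro measure_UNION_le) auto
  also have "\<dots> \<le> (\<Sum>g\<in>G. exp (- (real n * k\<^sup>2 / 2)))"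
    using prob_score_shift_small[OF n \<delta>(1)] G(3) unfolding A_def k_def by (intro sum_mono) auto
  also have "\<dots> \<le> 2 * real (nat \<lceil>2 * (K - \<delta>) / k\<rceil> + 2) * exp (- (real n * k\<^sup>2 / 2))"
    using G(2) by (simp add: mult_right_mono)
  finally show ?thesis unfolding k_def .
qed

text \<open>Large enough for \<open>envelope_ratio < 1\<close>.\<close>
definition big_radius :: real where
  "big_radius = sqrt (2 * (2 * moment moment_exp + 2) powr (2 / moment_exp)) + 1"

definition envelope_ratio :: real where
  "envelope_ratio = moment moment_exp / (big_radius\<^sup>2 / 2) powr (moment_exp / 2)"

text \<open>Keeps the remainder \<open>5 n \<bar>mle_err n \<omega>\<bar>\<close> of \<open>sum_psi_expansion\<close> below \<open>n \<epsilon> / 2\<close>.\<close>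
definition small_radius :: "real \<Rightarrow> real" where
  "small_radius \<epsilon> = min 1 (\<epsilon> / 10)"

definition good_event :: "real \<Rightarrow> nat \<Rightarrow> 'a set" where
  "good_event \<epsilon> n = {\<omega>\<in>space M. \<bar>mle_err n \<omega>\<bar> < small_radius \<epsilon>
     \<and> \<bar>score_deriv n \<omega> - real n * score_slope m\<bar> < real n * (\<epsilon> / 2)}"

definition bad_prob_bound :: "real \<Rightarrow> nat \<Rightarrow> real" where
  "bad_prob_bound \<epsilon> n = envelope_ratio ^ n
     + 2 * real (nat \<lceil>2 * (big_radius - small_radius \<epsilon>) / drift (small_radius \<epsilon>) big_radius\<rceil> + 2)
         * exp (- (real n * (drift (small_radius \<epsilon>) big_radius)\<^sup>2 / 2))
     + 2 * exp (- (real n * (\<epsilon> / 2)\<^sup>2 / 2))"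

lemma good_event_sets [measurable]: "good_event \<epsilon> n \<in> sets M"
  unfolding good_event_def by measurable

lemma big_radius_gt_1: "big_radius > 1"
  unfolding big_radius_def using moment_nonneg[of moment_exp] by simp

lemma envelope_ratio_bounds: "0 \<le> envelope_ratio" "envelope_ratio < 1"
proof -
  define B where "B = (2 * moment moment_exp + 2) powr (2 / moment_exp)"
  have M: "0 \<le> moment moment_exp" by (rule moment_nonneg)
  then have B: "B > 0" unfolding B_def by simp
  have "sqrt (2 * B) \<le> big_radius" unfolding big_radius_def B_def by simp
  then have "2 * B \<le> big_radius\<^sup>2"
    using B real_sqrt_le_iff[of "2 * B" "big_radius\<^sup>2"] big_radius_gt_1 by simp
  then have "B powr (moment_exp / 2) \<le> (big_radius\<^sup>2 / 2) powr (moment_exp / 2)"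
    using moment_exp_pos B by (intro powr_mono2) auto
  moreover have "B powr (moment_exp / 2) = 2 * moment moment_exp + 2"
    unfolding B_def using moment_exp_pos M by (simp add: powr_powr)
  ultimately have "2 * moment moment_exp + 2 \<le> (big_radius\<^sup>2 / 2) powr (moment_exp / 2)" by simp
  then show "0 \<le> envelope_ratio" "envelope_ratio < 1"
    unfolding envelope_ratio_def using M by (simp_all add: divide_less_eq)
qed

lemma small_radius: "0 < \<epsilon> \<Longrightarrow> 0 < small_radius \<epsilon> \<and> small_radius \<epsilon> \<le> 1 \<and> small_radius \<epsilon> \<le> \<epsilon> / 10 \<and> small_radius \<epsilon> < big_radius"
  unfolding small_radius_def using big_radius_gt_1 by auto

lemma bad_prob_bound_nonneg: "0 \<le> bad_prob_bound \<epsilon> n"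
  unfolding bad_prob_bound_def using envelope_ratio_bounds by simp

lemma LIMSEQ_cube_mult_bad_prob_bound:
  assumes "0 < \<epsilon>"
  shows "(\<lambda>n. real n ^ 3 * bad_prob_bound \<epsilon> n) \<longlonglongrightarrow> 0"
proof -
  define k where "k = drift (small_radius \<epsilon>) big_radius"
  define C where "C = 2 * real (nat \<lceil>2 * (big_radius - small_radius \<epsilon>) / k\<rceil> + 2)"
  have k: "k > 0" unfolding k_def using drift_pos small_radius[OF assms] by simp
  have "(\<lambda>n. real n ^ 3 * envelope_ratio ^ n + C * (real n ^ 3 * exp (- (real n * (k\<^sup>2 / 2))))
      + 2 * (real n ^ 3 * exp (- (real n * ((\<epsilon> / 2)\<^sup>2 / 2))))) \<longlonglongrightarrow> 0 + C * 0 + 2 * 0"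
    using envelope_ratio_bounds k assms
    by (intro tendsto_intros LIMSEQ_cube_mult_power LIMSEQ_cube_mult_exp) auto
  then show ?thesis unfolding bad_prob_bound_def C_def k_def by (simp add: algebra_simps)
qed

lemma LIMSEQ_mult_bad_prob_bound:
  assumes "0 < \<epsilon>"
  shows "(\<lambda>n. real n * bad_prob_bound \<epsilon> n) \<longlonglongrightarrow> 0"
proof (rule Lim_null_comparison[OF _ LIMSEQ_cube_mult_bad_prob_bound[OF assms]])
  have "real n * bad_prob_bound \<epsilon> n \<le> real n ^ 3 * bad_prob_bound \<epsilon> n" if "n \<ge> 1" for n
  proof -
    have "real n * 1 \<le> real n * (real n)\<^sup>2" using that by (intro mult_left_mono) auto
    then show ?thesis using bad_prob_bound_nonneg[of \<epsilon> n]
      by (intro mult_right_mono) (auto simp: power2_eq_square power3_eq_cube)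
  qed
  then show "\<forall>\<^sub>F n in sequentially. norm (real n * bad_prob_bound \<epsilon> n) \<le> real n ^ 3 * bad_prob_bound \<epsilon> n"
    using bad_prob_bound_nonneg eventually_sequentiallyI[of 1] by simp
qed

lemma prob_score_deriv_far:
  assumes "n > 0" "\<eta> > 0"
  shows "prob {\<omega>\<in>space M. real n * \<eta> \<le> \<bar>score_deriv n \<omega> - real n * score_slope m\<bar>}
    \<le> 2 * exp (- (real n * \<eta>\<^sup>2 / 2))"
proof -
  have "prob {\<omega>\<in>space M. real n * \<eta> \<le> \<bar>score_deriv n \<omega> - real n * score_slope m\<bar>}
      \<le> 2 * exp (-2 * (real n * \<eta>)\<^sup>2 / (real n * (1 - (-1))\<^sup>2))"
    using prob_abs_sum_centered_ge[of psi_deriv "-1" 1 n "real n * \<eta>"] psi_deriv_bounds assms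
    unfolding pvii_const_mult_integral_psi_deriv[OF m_gt] score_deriv_def by simp
  also have "-2 * (real n * \<eta>)\<^sup>2 / (real n * (1 - (-1))\<^sup>2) = - (real n * \<eta>\<^sup>2 / 2)"
    using assms by (simp add: power2_eq_square field_simps)
  finally show ?thesis .
qed

text \<open>Outside the good event, either the envelope is large, or \<open>mle_err\<close> lies between the two
  radii, or \<open>score_deriv\<close> is far from its mean.\<close>
lemma prob_not_good_event:
  assumes "0 < \<epsilon>" "n > 0"
  shows "prob (space M - good_event \<epsilon> n) \<le> bad_prob_bound \<epsilon> n"
proof -
  let ?d = "small_radius \<epsilon>" and ?K = "big_radius"
  define E1 where "E1 = {\<omega>\<in>space M. ?K\<^sup>2 \<le> envelope n \<omega>}"
  define E2 where "E2 = {\<omega>\<in>space M. ?d \<le> \<bar>mle_err n \<omega>\<bar> \<and> \<bar>mle_err n \<omega>\<bar> \<le> ?K}"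
  define E3 where "E3 = {\<omega>\<in>space M. real n * (\<epsilon> / 2) \<le> \<bar>score_deriv n \<omega> - real n * score_slope m\<bar>}"
  have [measurable]: "E1 \<in> sets M" "E2 \<in> sets M" "E3 \<in> sets M"
    unfolding E1_def E2_def E3_def by measurable
  have "space M - good_event \<epsilon> n \<subseteq> E1 \<union> E2 \<union> E3"
  proof
    fix \<omega> assume \<omega>: "\<omega> \<in> space M - good_event \<epsilon> n"
    show "\<omega> \<in> E1 \<union> E2 \<union> E3"
    proof (cases "\<bar>mle_err n \<omega>\<bar> > ?K")
      case True
      then have "?K\<^sup>2 < (mle_err n \<omega>)\<^sup>2"
        using big_radius_gt_1 power_strict_mono[of ?K "\<bar>mle_err n \<omega>\<bar>" 2] by simp
      then show ?thesis using mle_err_sq_le_envelope[OF \<open>n > 0\<close>, of \<omega>] \<omega> unfolding E1_def by auto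
    qed (use \<omega> in \<open>auto simp: good_event_def E2_def E3_def\<close>)
  qed
  then have "prob (space M - good_event \<epsilon> n) \<le> prob (E1 \<union> E2 \<union> E3)"
    by (intro finite_measure_mono) auto
  also have "\<dots> \<le> prob E1 + prob E2 + prob E3"
    by (intro order_trans[OF measure_Un_le] add_right_mono measure_Un_le) auto
  also have "prob E1 \<le> envelope_ratio ^ n"
    unfolding E1_def envelope_ratio_def using prob_envelope_ge[OF \<open>n > 0\<close>] big_radius_gt_1 by simp
  also have "prob E2 \<le> 2 * real (nat \<lceil>2 * (?K - ?d) / drift ?d ?K\<rceil> + 2) * exp (- (real n * (drift ?d ?K)\<^sup>2 / 2))"
    unfolding E2_def using small_radius[OF \<open>0 < \<epsilon>\<close>] by (intro prob_mle_err_between \<open>n > 0\<close>) auto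
  also have "prob E3 \<le> 2 * exp (- (real n * (\<epsilon> / 2)\<^sup>2 / 2))"
    unfolding E3_def using \<open>0 < \<epsilon>\<close> by (intro prob_score_deriv_far \<open>n > 0\<close>) simp
  finally show ?thesis unfolding bad_prob_bound_def by simp
qed

section \<open>The asymptotic variance\<close>

lemma abs_score_le: "\<bar>score n \<omega>\<bar> \<le> real n / 2"
proof -
  have "\<bar>score n \<omega>\<bar> \<le> (\<Sum>i<n. \<bar>psi (Y i \<omega>)\<bar>)" unfolding score_def by (rule sum_abs)
  also have "\<dots> \<le> (\<Sum>i<n. 1/2)" by (intro sum_mono abs_psi_le)
  finally show ?thesis by simp
qed

lemma score_sq_le: "(score n \<omega>)\<^sup>2 \<le> (real n)\<^sup>2 / 4"
  using power_mono[OF abs_score_le abs_ge_zero, of n \<omega> 2] by (simp add: power_divide)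

lemma integrable_score_sq: "integrable M (\<lambda>\<omega>. (score n \<omega>)\<^sup>2)"
  using score_sq_le by (intro integrable_const_bound[where B="(real n)\<^sup>2 / 4"]) auto

lemma expectation_score_sq: "expectation (\<lambda>\<omega>. (score n \<omega>)\<^sup>2) = real n * score_var m"
  unfolding score_def
  using expectation_sum_sq_centered[OF psi_measurable abs_psi_le integral_pvii_kernel_psi, of n]
    pvii_const_mult_integral_psi_sq[OF m_gt] by simp

text \<open>On the good event the score equation linearises to \<open>score = mle_err \<cdot> (score_deriv + R)\<close>
  with \<open>score_deriv + R\<close> within \<open>n \<epsilon>\<close> of \<open>n \<cdot> score_slope m\<close>.\<close>
lemma mle_err_sq_bounds:
  assumes \<epsilon>: "0 < \<epsilon>" "\<epsilon> \<le> score_slope m / 2" and n: "n > 0" and \<omega>: "\<omega> \<in> good_event \<epsilon> n"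
  shows "(score n \<omega>)\<^sup>2 / (real n * (score_slope m + \<epsilon>)\<^sup>2) \<le> real n * (mle_err n \<omega>)\<^sup>2"
    and "real n * (mle_err n \<omega>)\<^sup>2 \<le> (score n \<omega>)\<^sup>2 / (real n * (score_slope m - \<epsilon>)\<^sup>2)"
proof -
  let ?T = "mle_err n \<omega>" and ?\<mu> = "score_slope m"
  have T: "\<bar>?T\<bar> < small_radius \<epsilon>" and D: "\<bar>score_deriv n \<omega> - real n * ?\<mu>\<bar> < real n * (\<epsilon> / 2)"
    using \<omega> unfolding good_event_def by auto
  have T': "\<bar>?T\<bar> \<le> 1" "\<bar>?T\<bar> \<le> \<epsilon> / 10" using T small_radius[OF \<epsilon>(1)] by linarith+
  obtain R where R: "score n \<omega> = ?T * (score_deriv n \<omega> + R)" "\<bar>R\<bar> \<le> 5 * real n * \<bar>?T\<bar>"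
    using sum_psi_expansion[OF sum_psi_mle_err T'(1)] unfolding score_def score_deriv_def by blast
  have "5 * \<bar>?T\<bar> \<le> \<epsilon> / 2" using T'(2) by simp
  then have "5 * real n * \<bar>?T\<bar> \<le> real n * (\<epsilon> / 2)"
    using mult_left_mono[of "5 * \<bar>?T\<bar>" "\<epsilon> / 2" "real n"] by (simp add: algebra_simps)
  with R(2) have Rb: "\<bar>R\<bar> \<le> real n * (\<epsilon> / 2)" by linarith
  have "real n * (?\<mu> - \<epsilon>) = real n * ?\<mu> - 2 * (real n * (\<epsilon> / 2))"
    "real n * (?\<mu> + \<epsilon>) = real n * ?\<mu> + 2 * (real n * (\<epsilon> / 2))" by (simp_all add: algebra_simps)
  note e = this
  note b = abs_le_D1[OF Rb] abs_le_D2[OF Rb] abs_le_D1[OF less_imp_le[OF D]] abs_le_D2[OF less_imp_le[OF D]]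
  have lo: "real n * (?\<mu> - \<epsilon>) \<le> score_deriv n \<omega> + R"
    unfolding e(1) using b(2,4) by argo
  have hi: "score_deriv n \<omega> + R \<le> real n * (?\<mu> + \<epsilon>)"
    unfolding e(2) using b(1,3) by argo
  have pos: "0 < real n * (?\<mu> - \<epsilon>)" using n \<epsilon> score_slope_pos[OF m_gt] by simp
  have scale: "real n * (S / (real n * a)\<^sup>2) = S / (real n * a\<^sup>2)" for S a
    using n by (cases "a = 0") (simp_all add: field_simps power2_eq_square)
  have "real n * ((score n \<omega>)\<^sup>2 / (real n * (?\<mu> + \<epsilon>))\<^sup>2) \<le> real n * ?T\<^sup>2"
    using sq_bounds_of_eq_mult(1)[OF R(1) pos lo hi] by (rule mult_left_mono) simp
  then show "(score n \<omega>)\<^sup>2 / (real n * (?\<mu> + \<epsilon>)\<^sup>2) \<le> real n * ?T\<^sup>2" unfolding scale .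
  have "real n * ?T\<^sup>2 \<le> real n * ((score n \<omega>)\<^sup>2 / (real n * (?\<mu> - \<epsilon>))\<^sup>2)"
    using sq_bounds_of_eq_mult(2)[OF R(1) pos lo hi] by (rule mult_left_mono) simp
  then show "real n * ?T\<^sup>2 \<le> (score n \<omega>)\<^sup>2 / (real n * (?\<mu> - \<epsilon>)\<^sup>2)" unfolding scale .
qed

lemma n_mle_err_sq_le:
  assumes \<epsilon>: "0 < \<epsilon>" "\<epsilon> \<le> score_slope m / 2" and n: "n > 0" and \<omega>: "\<omega> \<in> space M"
  shows "real n * (mle_err n \<omega>)\<^sup>2 \<le> (score n \<omega>)\<^sup>2 / (real n * (score_slope m - \<epsilon>)\<^sup>2)
      + (envelope n \<omega>)\<^sup>2 / real n + real n ^ 3 * indicator (space M - good_event \<epsilon> n) \<omega>"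
proof (cases "\<omega> \<in> good_event \<epsilon> n")
  case True
  then show ?thesis using mle_err_sq_bounds(2)[OF \<epsilon> n True] by (simp add: add_increasing2)
next
  case False
  have "real n * (mle_err n \<omega>)\<^sup>2 \<le> real n * envelope n \<omega>"
    using mle_err_sq_le_envelope[OF n] by (intro mult_left_mono) auto
  also have "\<dots> \<le> (envelope n \<omega>)\<^sup>2 / real n + real n ^ 3"
    using n envelope_nonneg by (rule mult_le_sq_div_add_cube)
  finally have "real n * (mle_err n \<omega>)\<^sup>2 \<le> (envelope n \<omega>)\<^sup>2 / real n + real n ^ 3" .
  moreover have "0 \<le> (score n \<omega>)\<^sup>2 / (real n * (score_slope m - \<epsilon>)\<^sup>2)" by simp
  moreover have "indicator (space M - good_event \<epsilon> n) \<omega> = (1::real)" using False \<omega> by simp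
  ultimately show ?thesis by (simp only: mult_1_right)
qed

lemma n_mle_err_sq_ge:
  assumes \<epsilon>: "0 < \<epsilon>" "\<epsilon> \<le> score_slope m / 2" and n: "n > 0" and \<omega>: "\<omega> \<in> space M"
  shows "(score n \<omega>)\<^sup>2 / (real n * (score_slope m + \<epsilon>)\<^sup>2)
      - real n / (4 * (score_slope m + \<epsilon>)\<^sup>2) * indicator (space M - good_event \<epsilon> n) \<omega>
    \<le> real n * (mle_err n \<omega>)\<^sup>2"
proof (cases "\<omega> \<in> good_event \<epsilon> n")
  case True
  then show ?thesis using mle_err_sq_bounds(1)[OF \<epsilon> n True] by simp
next
  case False
  have p: "0 < real n * (score_slope m + \<epsilon>)\<^sup>2" using n \<epsilon> score_slope_pos[OF m_gt] by simp
  have "(score n \<omega>)\<^sup>2 / (real n * (score_slope m + \<epsilon>)\<^sup>2) \<le> ((real n)\<^sup>2 / 4) / (real n * (score_slope m + \<epsilon>)\<^sup>2)"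
    using score_sq_le p by (intro divide_right_mono) auto
  also have "\<dots> = real n / (4 * (score_slope m + \<epsilon>)\<^sup>2)"
    using p by (simp add: field_simps power2_eq_square[of "real n"])
  moreover have "0 \<le> real n * (mle_err n \<omega>)\<^sup>2" by simp
  moreover have "indicator (space M - good_event \<epsilon> n) \<omega> = (1::real)" using False \<omega> by simp
  ultimately show ?thesis by (simp only: mult_1_right)
qed

lemma integrable_mle_err_sq:
  assumes "n > 0" "4 / real n \<le> moment_exp"
  shows "integrable M (\<lambda>\<omega>. (mle_err n \<omega>)\<^sup>2)"
proof -
  have "2 / real n \<le> 4 / real n" by (simp add: divide_right_mono)
  with assms have "integrable M (envelope n)" by (intro integrable_envelope) auto
  then show ?thesis
  proof (rule Bochner_Integration.integrable_bound)
    show "AE \<omega> in M. norm ((mle_err n \<omega>)\<^sup>2) \<le> norm (envelope n \<omega>)"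
      using mle_err_sq_le_envelope[OF assms(1)] envelope_nonneg by (intro AE_I2) simp
  qed measurable
qed

lemma integrable_indicator_not_good: "integrable M (\<lambda>\<omega>. indicator (space M - good_event \<epsilon> n) \<omega> :: real)"
  by (intro integrable_real_indicator) (auto simp: less_top[symmetric])

lemma expectation_score_sq_div:
  "n > 0 \<Longrightarrow> expectation (\<lambda>\<omega>. (score n \<omega>)\<^sup>2) / (real n * a) = score_var m / a"
  unfolding expectation_score_sq by simp

lemma n_expectation_mle_err_sq_le:
  assumes \<epsilon>: "0 < \<epsilon>" "\<epsilon> \<le> score_slope m / 2" and n: "n > 0" "4 / real n \<le> moment_exp"
  shows "real n * expectation (\<lambda>\<omega>. (mle_err n \<omega>)\<^sup>2)
    \<le> score_var m / (score_slope m - \<epsilon>)\<^sup>2 + 4 * exp (4 * (moment moment_exp - 1) / moment_exp) / real n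
      + real n ^ 3 * bad_prob_bound \<epsilon> n"
proof -
  have "real n * expectation (\<lambda>\<omega>. (mle_err n \<omega>)\<^sup>2) = expectation (\<lambda>\<omega>. real n * (mle_err n \<omega>)\<^sup>2)"
    by simp
  also have "\<dots> \<le> expectation (\<lambda>\<omega>. (score n \<omega>)\<^sup>2 / (real n * (score_slope m - \<epsilon>)\<^sup>2)
      + (envelope n \<omega>)\<^sup>2 / real n + real n ^ 3 * indicator (space M - good_event \<epsilon> n) \<omega>)"
    using integrable_mle_err_sq[OF n] integrable_score_sq integrable_envelope_sq[OF n]
      integrable_indicator_not_good n_mle_err_sq_le[OF \<epsilon> n(1)]
    by (intro integral_mono) auto
  also have "\<dots> = score_var m / (score_slope m - \<epsilon>)\<^sup>2 + expectation (\<lambda>\<omega>. (envelope n \<omega>)\<^sup>2) / real n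
      + real n ^ 3 * prob (space M - good_event \<epsilon> n)"
    using integrable_score_sq integrable_envelope_sq[OF n] integrable_indicator_not_good
      expectation_score_sq_div[OF n(1)] by simp
  also have "\<dots> \<le> score_var m / (score_slope m - \<epsilon>)\<^sup>2 + 4 * exp (4 * (moment moment_exp - 1) / moment_exp) / real n
      + real n ^ 3 * bad_prob_bound \<epsilon> n"
    using expectation_envelope_sq_le[OF n] prob_not_good_event[OF \<epsilon>(1) n(1)]
    by (intro add_mono mult_left_mono divide_right_mono) auto
  finally show ?thesis .
qed

lemma n_expectation_mle_err_sq_ge:
  assumes \<epsilon>: "0 < \<epsilon>" "\<epsilon> \<le> score_slope m / 2" and n: "n > 0" "4 / real n \<le> moment_exp"
  shows "score_var m / (score_slope m + \<epsilon>)\<^sup>2 - real n / (4 * (score_slope m + \<epsilon>)\<^sup>2) * bad_prob_bound \<epsilon> n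
    \<le> real n * expectation (\<lambda>\<omega>. (mle_err n \<omega>)\<^sup>2)"
proof -
  have "real n / (4 * (score_slope m + \<epsilon>)\<^sup>2) * prob (space M - good_event \<epsilon> n)
      \<le> real n / (4 * (score_slope m + \<epsilon>)\<^sup>2) * bad_prob_bound \<epsilon> n"
    using prob_not_good_event[OF \<epsilon>(1) n(1)] by (intro mult_left_mono) auto
  then have "score_var m / (score_slope m + \<epsilon>)\<^sup>2 - real n / (4 * (score_slope m + \<epsilon>)\<^sup>2) * bad_prob_bound \<epsilon> n
      \<le> score_var m / (score_slope m + \<epsilon>)\<^sup>2
        - real n / (4 * (score_slope m + \<epsilon>)\<^sup>2) * prob (space M - good_event \<epsilon> n)"
    by linarith
  also have "\<dots> = expectation (\<lambda>\<omega>. (score n \<omega>)\<^sup>2 / (real n * (score_slope m + \<epsilon>)\<^sup>2)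
      - real n / (4 * (score_slope m + \<epsilon>)\<^sup>2) * indicator (space M - good_event \<epsilon> n) \<omega>)"
    using integrable_score_sq integrable_indicator_not_good expectation_score_sq_div[OF n(1)] by simp
  also have "\<dots> \<le> expectation (\<lambda>\<omega>. real n * (mle_err n \<omega>)\<^sup>2)"
    using integrable_mle_err_sq[OF n] integrable_score_sq integrable_indicator_not_good
      n_mle_err_sq_ge[OF \<epsilon> n(1)]
    by (intro integral_mono) auto
  also have "\<dots> = real n * expectation (\<lambda>\<omega>. (mle_err n \<omega>)\<^sup>2)" by simp
  finally show ?thesis .
qed

lemma eventually_moment_exp_large: "eventually (\<lambda>n. n > 0 \<and> 4 / real n \<le> moment_exp) sequentially"
proof -
  have "(\<lambda>n. 4 / real n) \<longlonglongrightarrow> 0"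
    by (intro tendsto_divide_0[OF tendsto_const] filterlim_at_top_imp_at_infinity filterlim_real_sequentially)
  from order_tendstoD(2)[OF this moment_exp_pos] eventually_gt_at_top[of 0]
  show ?thesis by eventually_elim auto
qed

lemma LIMSEQ_n_expectation_mle_err_sq:
  "(\<lambda>n. real n * expectation (\<lambda>\<omega>. (mle_err n \<omega>)\<^sup>2)) \<longlonglongrightarrow> score_var m / (score_slope m)\<^sup>2"
proof -
  let ?\<mu> = "score_slope m"
  have \<mu>: "?\<mu> > 0" by (rule score_slope_pos[OF m_gt])
  have "((\<lambda>\<epsilon>. score_var m / (?\<mu> + \<epsilon>)\<^sup>2) \<longlongrightarrow> score_var m / (?\<mu> + 0)\<^sup>2) (at_right 0)"
    "((\<lambda>\<epsilon>. score_var m / (?\<mu> - \<epsilon>)\<^sup>2) \<longlongrightarrow> score_var m / (?\<mu> - 0)\<^sup>2) (at_right 0)"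
    using \<mu> by (intro tendsto_intros tendsto_ident_at; simp)+
  then have lo: "((\<lambda>\<epsilon>. score_var m / (?\<mu> + \<epsilon>)\<^sup>2) \<longlongrightarrow> score_var m / ?\<mu>\<^sup>2) (at_right 0)"
    and hi: "((\<lambda>\<epsilon>. score_var m / (?\<mu> - \<epsilon>)\<^sup>2) \<longlongrightarrow> score_var m / ?\<mu>\<^sup>2) (at_right 0)"
    by simp_all
  show ?thesis
  proof (rule LIMSEQ_of_eps_bounds[OF lo hi half_gt_zero[OF \<mu>]])
    fix \<epsilon> e :: real assume \<epsilon>: "0 < \<epsilon>" "\<epsilon> < ?\<mu> / 2" and e: "0 < e"
    define C where "C = 4 * exp (4 * (moment moment_exp - 1) / moment_exp)"
    from LIMSEQ_mult_bad_prob_bound[OF \<epsilon>(1)]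
    have "(\<lambda>n. real n / (4 * (?\<mu> + \<epsilon>)\<^sup>2) * bad_prob_bound \<epsilon> n) \<longlonglongrightarrow> 0"
      using tendsto_mult_left[of _ 0 sequentially "1 / (4 * (?\<mu> + \<epsilon>)\<^sup>2)"] by simp
    moreover have "(\<lambda>n. C / real n + real n ^ 3 * bad_prob_bound \<epsilon> n) \<longlonglongrightarrow> 0 + 0"
      by (intro tendsto_add LIMSEQ_cube_mult_bad_prob_bound[OF \<epsilon>(1)] tendsto_divide_0[OF tendsto_const]
          filterlim_at_top_imp_at_infinity filterlim_real_sequentially)
    ultimately have "eventually (\<lambda>n. real n / (4 * (?\<mu> + \<epsilon>)\<^sup>2) * bad_prob_bound \<epsilon> n < e) sequentially"
      "eventually (\<lambda>n. C / real n + real n ^ 3 * bad_prob_bound \<epsilon> n < e) sequentially"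
      using e by (auto dest: order_tendstoD(2))
    with eventually_moment_exp_large
    show "eventually (\<lambda>n. score_var m / (?\<mu> + \<epsilon>)\<^sup>2 - e < real n * expectation (\<lambda>\<omega>. (mle_err n \<omega>)\<^sup>2)
        \<and> real n * expectation (\<lambda>\<omega>. (mle_err n \<omega>)\<^sup>2) < score_var m / (?\<mu> - \<epsilon>)\<^sup>2 + e) sequentially"
    proof eventually_elim
      case (elim n)
      with \<epsilon> n_expectation_mle_err_sq_le[of \<epsilon> n] n_expectation_mle_err_sq_ge[of \<epsilon> n]
      show ?case unfolding C_def by fastforce
    qed
  qed
qed

end

theorem theorem1p6:
  fixes m \<theta> :: real
    and M :: "'a measure"
    and X :: "nat \<Rightarrow> 'a \<Rightarrow> real"
    and est :: "nat \<Rightarrow> (nat \<Rightarrow> real) \<Rightarrow> real"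
  assumes m_gt: "m > 1/2"
    and prob: "prob_space M"
    and indep: "prob_space.indep_vars M (\<lambda>_. borel) X UNIV"
    and distr: "\<And>i. distributed M lborel (X i) (\<lambda>x. ennreal (pvii_density m (x - \<theta>)))"
    and est_meas: "\<And>n. est n \<in> borel_measurable (PiM {..<n} (\<lambda>_. lborel))"
    and est_mle: "\<And>n x t. (\<Prod>i<n. pvii_density m (x i - t))
                           \<le> (\<Prod>i<n. pvii_density m (x i - est n x))"
  shows "(\<exists>N. \<forall>n\<ge>N. integrable M (\<lambda>\<omega>. (est n (restrict (\<lambda>i. X i \<omega>) {..<n}) - \<theta>)\<^sup>2))
       \<and> (\<lambda>n. real n * prob_space.expectation M
                 (\<lambda>\<omega>. (est n (restrict (\<lambda>i. X i \<omega>) {..<n}) - \<theta>)\<^sup>2))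
           \<longlonglongrightarrow> (m + 1) / (m * (2 * m - 1))"
proof -
  interpret pvii_mle M m \<theta> X est
    using assms by (simp add: pvii_mle_def pvii_mle_axioms_def)
  have err: "(\<lambda>\<omega>. (est n (restrict (\<lambda>i. X i \<omega>) {..<n}) - \<theta>)\<^sup>2) = (\<lambda>\<omega>. (mle_err n \<omega>)\<^sup>2)" for n
    unfolding mle_err_def ..
  have "eventually (\<lambda>n. integrable M (\<lambda>\<omega>. (mle_err n \<omega>)\<^sup>2)) sequentially"
    using eventually_moment_exp_large by eventually_elim (auto intro: integrable_mle_err_sq)
  then show ?thesis
    unfolding err eventually_sequentially
    using LIMSEQ_n_expectation_mle_err_sq score_var_div_score_slope_sq[OF m_gt] by simp
qed

end
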